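(* Let $\mathcal{H}$ be a separable Hilbert space and let $a_j\in B(\mathcal{H})$ ($j=1,2,\dots$) satisfy $\sum_{j=1}^\infty a_j^*a_j=1=\sum_{j=1}^\infty a_ja_j^*$, the sums converging in the weak* (equivalently strong) operator topology. Let $a=(a_j)$ denote the corresponding bounded column operator $\mathcal{H}\to\mathcal{H}^\infty$, and define $\Psi:B(\mathcal{H})\to B(\mathcal{H})$ by $\Psi(x)=\sum_j a_j^*xa_j=a^*x^{(\infty)}a$, where $x^{(\infty)}$ is the block-diagonal operator on $\mathcal{H}^\infty$ with $x$ in each diagonal entry. Then: (i) $\Psi(C^2(\mathcal{H}))\subseteq C^2(\mathcal{H})$ and the restriction $\Phi:=\Psi|_{C^2(\mathcal{H})}$ satisfies $\|\Phi(x)\|_2\le\|x\|_2$ for all $x\in C^2(\mathcal{H})$. (ii) For all $x\in C^2(\mathcal{H})$, $\|ax-x^{(\infty)}a\|_2^2\le 2\|x-\Phi(x)\|_2\|x\|_2$ and $\|\Phi(x)-x\|_2\le\|ax-x^{(\infty)}a\|_2$. (iii) The operator $\Phi-1$ on the Hilbert space $C^2(\mathcal{H})$ is not invertible if and only if there exists a sequence of selfadjoint $x_k\in C^2(\mathcal{H})$ with $\|x_k\|_2=1$ and $\lim_{k\to\infty}\|\Phi(x_k)-x_k\|_2=0$.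
   Context: $C^2(\mathcal{H})$ denotes the Hilbert–Schmidt operators on $\mathcal{H}$ with norm $\|x\|_2=\sqrt{\mathrm{tr}(x^*x)}$; for an operator $\mathcal{H}\to\mathcal{H}^\infty$ (such as $ax-x^{(\infty)}a$), $\|\cdot\|_2$ likewise denotes the Hilbert–Schmidt norm (possibly $+\infty$). $\mathcal{H}^\infty$ is the Hilbert direct sum of countably many copies of $\mathcal{H}$. *)

theory Defs
  imports "HOL-Analysis.Analysis"
begin

text \<open>Model: a (nonzero) separable complex Hilbert space is identified with
  l2('i) for a countable index type 'i (orthonormal basis indexed by 'i).
  Vectors are functions 'i => complex, bounded operators are given by their
  matrices w.r.t. this basis, of type 'i => 'i => complex (row, column).\<close>

definition ell2 :: "('i \<Rightarrow> complex) \<Rightarrow> bool" where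
  "ell2 v \<longleftrightarrow> (\<lambda>i. (cmod (v i))^2) summable_on UNIV"

definition l2norm :: "('i \<Rightarrow> complex) \<Rightarrow> real" where
  "l2norm v = sqrt (\<Sum>\<^sub>\<infinity>i. (cmod (v i))^2)"

definition mat_apply :: "('r \<Rightarrow> 'c \<Rightarrow> complex) \<Rightarrow> ('c \<Rightarrow> complex) \<Rightarrow> 'r \<Rightarrow> complex" where
  "mat_apply A v i = (\<Sum>\<^sub>\<infinity>j. A i j * v j)"

definition mat_mult :: "('r \<Rightarrow> 'm \<Rightarrow> complex) \<Rightarrow> ('m \<Rightarrow> 'c \<Rightarrow> complex) \<Rightarrow> 'r \<Rightarrow> 'c \<Rightarrow> complex" where
  "mat_mult A B i k = (\<Sum>\<^sub>\<infinity>j. A i j * B j k)"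

definition adj :: "('r \<Rightarrow> 'c \<Rightarrow> complex) \<Rightarrow> 'c \<Rightarrow> 'r \<Rightarrow> complex" where
  "adj A i j = cnj (A j i)"

definition bounded_mat :: "('i \<Rightarrow> 'i \<Rightarrow> complex) \<Rightarrow> bool" where
  "bounded_mat A \<longleftrightarrow>
     (\<forall>v. ell2 v \<longrightarrow> (\<forall>i. (\<lambda>j. A i j * v j) summable_on UNIV) \<and> ell2 (mat_apply A v)) \<and>
     (\<exists>C. \<forall>v. ell2 v \<longrightarrow> l2norm (mat_apply A v) \<le> C * l2norm v)"

definition hs2 :: "('r \<Rightarrow> 'c \<Rightarrow> complex) \<Rightarrow> ennreal" where
  "hs2 M = (\<Sum>\<^sub>\<infinity>p. ennreal ((cmod (M (fst p) (snd p)))^2))"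

definition hs_norm :: "('r \<Rightarrow> 'c \<Rightarrow> complex) \<Rightarrow> real" where
  "hs_norm M = sqrt (enn2real (hs2 M))"

definition is_HS :: "('i \<Rightarrow> 'i \<Rightarrow> complex) \<Rightarrow> bool" where
  "is_HS M \<longleftrightarrow> hs2 M < \<infinity>"

definition Psi :: "(nat \<Rightarrow> 'i \<Rightarrow> 'i \<Rightarrow> complex) \<Rightarrow> ('i \<Rightarrow> 'i \<Rightarrow> complex) \<Rightarrow> 'i \<Rightarrow> 'i \<Rightarrow> complex" where
  "Psi a x i k = (\<Sum>j. mat_mult (adj (a j)) (mat_mult x (a j)) i k)"

text \<open>The operator a x - x^(\<infinity>) a : H \<rightarrow> H^\<infinity>, matrix with rows indexed by nat \<times> 'i.\<close>
definition commut :: "(nat \<Rightarrow> 'i \<Rightarrow> 'i \<Rightarrow> complex) \<Rightarrow> ('i \<Rightarrow> 'i \<Rightarrow> complex) \<Rightarrow> nat \<times> 'i \<Rightarrow> 'i \<Rightarrow> complex" where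
  "commut a x p k = mat_mult (a (fst p)) x (snd p) k - mat_mult x (a (fst p)) (snd p) k"

definition sot_sum_id :: "(nat \<Rightarrow> 'i \<Rightarrow> 'i \<Rightarrow> complex) \<Rightarrow> bool" where
  "sot_sum_id T \<longleftrightarrow> (\<forall>v. ell2 v \<longrightarrow>
     (\<lambda>n. l2norm (\<lambda>i. mat_apply (\<lambda>r c. \<Sum>j<n. T j r c) v i - v i)) \<longlonglongrightarrow> 0)"

definition HS_invertible :: "(('i \<Rightarrow> 'i \<Rightarrow> complex) \<Rightarrow> ('i \<Rightarrow> 'i \<Rightarrow> complex)) \<Rightarrow> bool" where
  "HS_invertible F \<longleftrightarrow> (\<exists>G. (\<forall>y. is_HS y \<longrightarrow> is_HS (G y)) \<and>
     (\<forall>x. is_HS x \<longrightarrow> G (F x) = x) \<and> (\<forall>y. is_HS y \<longrightarrow> F (G y) = y) \<and>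
     (\<exists>C. \<forall>y. is_HS y \<longrightarrow> hs_norm (G y) \<le> C * hs_norm y))"

end

theory Submission
  imports Defs
begin

text \<open>
  The hypotheses \<open>\<Sum>\<^sub>j a\<^sub>j\<^sup>* a\<^sub>j = 1 = \<Sum>\<^sub>j a\<^sub>j a\<^sub>j\<^sup>*\<close> make \<open>x \<mapsto> (a\<^sub>j x)\<^sub>j\<close> and \<open>x \<mapsto> (x a\<^sub>j)\<^sub>j\<close>
  isometries of \<open>C\<^sup>2(H)\<close> into \<open>C\<^sup>2(H)\<^sup>\<infinity>\<close>, while the row operator \<open>(Y\<^sub>j)\<^sub>j \<mapsto> \<Sum>\<^sub>j a\<^sub>j\<^sup>* Y\<^sub>j\<close>
  is a contraction back. Since \<open>\<Phi>(x) = \<Sum>\<^sub>j a\<^sub>j\<^sup>* (x a\<^sub>j)\<close> and \<open>x = \<Sum>\<^sub>j a\<^sub>j\<^sup>* (a\<^sub>j x)\<close>, this gives (i)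
  and \<open>\<Phi>(x) - x = \<Sum>\<^sub>j a\<^sub>j\<^sup>* (x a\<^sub>j - a\<^sub>j x)\<close>, whence the second inequality of (ii). Expanding
  \<open>\<parallel>a x - x\<^sup>(\<^sup>\<infinity>\<^sup>) a\<parallel>\<^sub>2\<^sup>2 = \<Sum>\<^sub>j \<parallel>x a\<^sub>j - a\<^sub>j x\<parallel>\<^sub>2\<^sup>2 = 2\<parallel>x\<parallel>\<^sub>2\<^sup>2 - 2 Re \<langle>x, \<Phi>(x)\<rangle>\<close> and applying
  Cauchy--Schwarz gives the first.

  For (iii): \<open>\<Phi> - 1\<close> is invertible iff it is bounded below. A bounded-below \<open>1 - \<Phi>\<close> with
  \<open>\<Phi>\<close> a contraction is onto by a continuity argument in \<open>t \<mapsto> 1 - t\<Phi>\<close>. If it is not bounded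
  below, an approximate fixed point \<open>x\<close> of \<open>\<Phi>\<close> splits into its selfadjoint real and imaginary
  parts, which are again approximate fixed points since \<open>\<Phi>\<close> commutes with the adjoint, and one
  of them carries at least half of the norm of \<open>x\<close>.
\<close>

lemma nonneg_summable_on_bounded:
  fixes f :: "'a \<Rightarrow> real"
  assumes nn: "\<And>x. x \<in> A \<Longrightarrow> 0 \<le> f x" and b: "\<And>F. finite F \<Longrightarrow> F \<subseteq> A \<Longrightarrow> sum f F \<le> M"
  shows "f summable_on A" "infsum f A \<le> M"
proof -
  show s: "f summable_on A"
    by (rule nonneg_bdd_above_summable_on[OF nn]) (use b in \<open>auto intro!: bdd_aboveI\<close>)
  show "infsum f A \<le> M" by (rule infsum_le_finite_sums[OF s b])
qed

lemma summable_on_finite_support: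
  fixes f :: "'a \<Rightarrow> 'c::topological_comm_monoid_add"
  assumes "finite F" "\<And>i. i \<notin> F \<Longrightarrow> f i = 0"
  shows "f summable_on UNIV"
  using summable_on_finite[OF assms(1), of f] summable_on_cong_neutral[of F UNIV f f] assms(2) by auto

lemma infsum_if_finite:
  fixes f :: "'a \<Rightarrow> 'c::{topological_comm_monoid_add,t2_space}"
  assumes "finite F" shows "(\<Sum>\<^sub>\<infinity>j. if j \<in> F then f j else 0) = sum f F"
proof -
  have "(\<Sum>\<^sub>\<infinity>j. if j \<in> F then f j else 0) = (\<Sum>\<^sub>\<infinity>j\<in>F. if j \<in> F then f j else 0)"
    by (rule infsum_cong_neutral) auto
  then show ?thesis using assms by simp
qed

lemma summable_on_finite_sum:
  fixes f :: "'a \<Rightarrow> 'b \<Rightarrow> 'c::{topological_comm_monoid_add,t2_space}"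
  assumes "finite F" "\<And>i. i \<in> F \<Longrightarrow> f i summable_on A"
  shows "(\<lambda>x. \<Sum>i\<in>F. f i x) summable_on A"
  using assms by (induction F rule: finite_induct) (auto intro!: summable_on_add)

lemma infsum_finite_sum:
  fixes f :: "'a \<Rightarrow> 'b \<Rightarrow> 'c::{topological_comm_monoid_add,t2_space}"
  assumes "finite F" "\<And>i. i \<in> F \<Longrightarrow> f i summable_on A"
  shows "infsum (\<lambda>x. \<Sum>i\<in>F. f i x) A = (\<Sum>i\<in>F. infsum (f i) A)"
  using assms
proof (induction F rule: finite_induct)
  case (insert a F)
  have "infsum (\<lambda>x. f a x + (\<Sum>i\<in>F. f i x)) A = infsum (f a) A + infsum (\<lambda>x. \<Sum>i\<in>F. f i x) A"
    by (rule infsum_add) (use insert in \<open>auto intro!: summable_on_finite_sum\<close>)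
  with insert show ?case by simp
qed simp

lemma infsum_diff:
  fixes f g :: "'a \<Rightarrow> 'b::{topological_ab_group_add,t2_space}"
  assumes "f summable_on A" "g summable_on A"
  shows "infsum (\<lambda>x. f x - g x) A = infsum f A - infsum g A"
proof -
  have "infsum (\<lambda>x. f x + - g x) A = infsum f A + infsum (\<lambda>x. - g x) A"
    by (rule infsum_add) (use assms in \<open>auto simp: summable_on_uminus\<close>)
  then show ?thesis by (simp add: infsum_uminus)
qed

lemma suminf_eq_infsum:
  "(f :: nat \<Rightarrow> 'a::{topological_comm_monoid_add,t2_space}) summable_on UNIV \<Longrightarrow> suminf f = infsum f UNIV"
  using has_sum_imp_sums[OF has_sum_infsum] sums_unique by metis

lemma infsum_ennreal_eq:
  fixes g :: "'a \<Rightarrow> real" assumes nn: "\<And>x. 0 \<le> g x"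
  shows "(\<Sum>\<^sub>\<infinity>x. ennreal (g x)) = (if g summable_on UNIV then ennreal (infsum g UNIV) else \<infinity>)"
proof -
  have E: "(\<Sum>\<^sub>\<infinity>x. ennreal (g x)) = (SUP F\<in>{F. finite F \<and> F \<subseteq> UNIV}. ennreal (sum g F))"
    using nonneg_infsum_complete[of UNIV "\<lambda>x. ennreal (g x)"] sum_ennreal[of _ g] nn by simp
  show ?thesis
  proof (cases "g summable_on UNIV")
    case True
    then show ?thesis
      unfolding E using infsum_nonneg_is_SUPREMUM_ennreal[OF True] nn sum_ennreal[of _ g] by simp
  next
    case False
    have "(SUP F\<in>{F. finite F \<and> F \<subseteq> UNIV}. ennreal (sum g F)) = \<infinity>"
    proof (rule ccontr)
      assume "(SUP F\<in>{F. finite F \<and> F \<subseteq> UNIV}. ennreal (sum g F)) \<noteq> \<infinity>"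
      then obtain M where M: "(SUP F\<in>{F. finite F \<and> F \<subseteq> UNIV}. ennreal (sum g F)) = ennreal M" "0 \<le> M"
        by (cases "(SUP F\<in>{F. finite F \<and> F \<subseteq> UNIV}. ennreal (sum g F))" rule: ennreal_cases) auto
      have "sum g F \<le> M" if "finite F" for F
      proof -
        have "ennreal (sum g F) \<le> ennreal M" unfolding M(1)[symmetric] by (rule SUP_upper) (use that in auto)
        then show ?thesis using M(2) by (simp add: ennreal_le_iff)
      qed
      then have "g summable_on UNIV" by (intro nonneg_summable_on_bounded(1)) (use nn in auto)
      with False show False by simp
    qed
    then show ?thesis unfolding E using False by simp
  qed
qed

lemma summable_on_pairs_imp_rows:
  fixes g :: "'a \<times> 'b \<Rightarrow> real"
  assumes "g summable_on UNIV"
  shows "(\<lambda>b. g (a, b)) summable_on UNIV" "((\<lambda>a. \<Sum>\<^sub>\<infinity>b. g (a, b)) has_sum infsum g UNIV) UNIV"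
proof -
  have s: "(\<lambda>(x, y). g (x, y)) summable_on Sigma UNIV (\<lambda>_. UNIV)" using assms by simp
  show "(\<lambda>b. g (a, b)) summable_on UNIV"
    using summable_on_SigmaD1[OF s, of a] by simp
  have "(\<lambda>a. \<Sum>\<^sub>\<infinity>b. g (a, b)) summable_on UNIV"
    using summable_on_Sigma_banach[OF s] by simp
  moreover have "(\<Sum>\<^sub>\<infinity>a. \<Sum>\<^sub>\<infinity>b. g (a, b)) = infsum g UNIV"
    using infsum_Sigma_banach[of g UNIV "\<lambda>_. UNIV"] assms by simp
  ultimately show "((\<lambda>a. \<Sum>\<^sub>\<infinity>b. g (a, b)) has_sum infsum g UNIV) UNIV"
    by (simp add: has_sum_iff)
qed

lemma summable_on_pairs_from_rows:
  fixes g :: "'a \<times> 'b \<Rightarrow> real"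
  assumes "\<And>p. 0 \<le> g p" and "\<And>a. ((\<lambda>b. g (a, b)) has_sum h a) UNIV" and "h summable_on UNIV"
  shows "g summable_on UNIV"
  using summable_on_SigmaI[where A=UNIV and B="\<lambda>_. UNIV" and f=g and g=h] assms by simp

lemma summable_on_UNIV_swap:
  "g summable_on UNIV \<longleftrightarrow> (\<lambda>(x, y). g (y, x)) summable_on UNIV"
  using summable_on_swap[of g UNIV UNIV] by simp

lemma infsum_UNIV_swap:
  "infsum g UNIV = infsum (\<lambda>(x, y). g (y, x)) UNIV"
proof -
  have b: "bij_betw (\<lambda>(x, y). (y, x)) UNIV UNIV"
    by (rule bij_betwI[of _ _ _ "\<lambda>(x, y). (y, x)"]) auto
  show ?thesis using infsum_reindex_bij_betw[OF b, of g] by (simp add: case_prod_unfold)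
qed

definition l2inner :: "('i \<Rightarrow> complex) \<Rightarrow> ('i \<Rightarrow> complex) \<Rightarrow> complex" where
  "l2inner u v = (\<Sum>\<^sub>\<infinity>i. cnj (u i) * v i)"

definition trunc_vec :: "'i set \<Rightarrow> ('i \<Rightarrow> complex) \<Rightarrow> 'i \<Rightarrow> complex" where
  "trunc_vec F u = (\<lambda>i. if i \<in> F then u i else 0)"

definition basis_vec :: "'i \<Rightarrow> 'i \<Rightarrow> complex" where
  "basis_vec k = (\<lambda>i. if i = k then 1 else 0)"

lemma l2norm_power2: "(l2norm v)^2 = (\<Sum>\<^sub>\<infinity>i. (cmod (v i))^2)"
  unfolding l2norm_def by (simp add: infsum_nonneg)

lemma l2norm_nonneg[simp]: "0 \<le> l2norm v"
  unfolding l2norm_def by (simp add: infsum_nonneg)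

lemma sum_le_l2norm_power2: "ell2 v \<Longrightarrow> finite F \<Longrightarrow> (\<Sum>i\<in>F. (cmod (v i))^2) \<le> (l2norm v)^2"
  unfolding l2norm_power2 ell2_def by (rule finite_sum_le_infsum) auto

lemma ell2_finite_sums_bounded:
  assumes "\<And>F. finite F \<Longrightarrow> (\<Sum>i\<in>F. (cmod (v i))^2) \<le> M^2" "0 \<le> M"
  shows "ell2 v" "l2norm v \<le> M"
proof -
  show "ell2 v" unfolding ell2_def by (rule nonneg_summable_on_bounded(1)) (use assms in auto)
  have "(l2norm v)^2 \<le> M^2"
    unfolding l2norm_power2 by (rule nonneg_summable_on_bounded(2)) (use assms in auto)
  then show "l2norm v \<le> M" using assms(2) by (meson l2norm_nonneg power2_le_imp_le)
qed

lemma ell2_comparison: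
  assumes "ell2 u" "\<And>i. cmod (v i) \<le> C * cmod (u i)"
  shows "ell2 v"
  unfolding ell2_def
proof (rule summable_on_comparison_test)
  show "(\<lambda>i. C^2 * (cmod (u i))^2) summable_on UNIV"
    using assms(1) unfolding ell2_def by (rule summable_on_cmult_right)
  fix i
  have "cmod (v i) \<le> \<bar>C\<bar> * cmod (u i)" using assms(2)[of i]
    by (meson abs_ge_self dual_order.trans mult_right_mono norm_ge_zero)
  then have "(cmod (v i))^2 \<le> (\<bar>C\<bar> * cmod (u i))^2" by (simp add: power_mono)
  then show "(cmod (v i))^2 \<le> C^2 * (cmod (u i))^2" by (simp add: power_mult_distrib)
qed auto

lemma ell2_cmult: "ell2 v \<Longrightarrow> ell2 (\<lambda>i. c * v i)"
  by (rule ell2_comparison[where C="cmod c"]) (auto simp: norm_mult)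

lemma ell2_cnj: "ell2 v \<Longrightarrow> ell2 (\<lambda>i. cnj (v i))"
  by (rule ell2_comparison[where C=1]) auto

lemma ell2_uminus: "ell2 v \<Longrightarrow> ell2 (\<lambda>i. - v i)"
  by (rule ell2_comparison[where C=1]) auto

lemma ell2_add:
  assumes "ell2 u" "ell2 v" shows "ell2 (\<lambda>i. u i + v i)"
  unfolding ell2_def
proof (rule summable_on_comparison_test)
  show "(\<lambda>i. 2 * (cmod (u i))^2 + 2 * (cmod (v i))^2) summable_on UNIV"
    using assms unfolding ell2_def by (intro summable_on_add summable_on_cmult_right)
  fix i
  have "(cmod (u i + v i))^2 \<le> (cmod (u i) + cmod (v i))^2"
    by (simp add: norm_triangle_ineq power_mono)
  also have "\<dots> \<le> 2 * (cmod (u i))^2 + 2 * (cmod (v i))^2"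
    using sum_squares_bound[of "cmod (u i)" "cmod (v i)"] by (simp add: power2_sum)
  finally show "(cmod (u i + v i))^2 \<le> 2 * (cmod (u i))^2 + 2 * (cmod (v i))^2" .
qed auto

lemma ell2_diff: "ell2 u \<Longrightarrow> ell2 v \<Longrightarrow> ell2 (\<lambda>i. u i - v i)"
  using ell2_add[of u "\<lambda>i. - v i"] ell2_uminus[of v] by simp

lemma ell2_zero[simp]: "ell2 (\<lambda>i. 0)"
  unfolding ell2_def by simp

lemma ell2_sum: "finite N \<Longrightarrow> (\<And>j. j \<in> N \<Longrightarrow> ell2 (f j)) \<Longrightarrow> ell2 (\<lambda>i. \<Sum>j\<in>N. f j i)"
  by (induction N rule: finite_induct) (auto intro!: ell2_add)

lemma ell2_finite_support:
  assumes "finite F" "\<And>i. i \<notin> F \<Longrightarrow> v i = 0" shows "ell2 v"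
  unfolding ell2_def by (rule summable_on_finite_support[OF assms(1)]) (use assms(2) in auto)

lemma ell2_trunc_vec: "ell2 u \<Longrightarrow> ell2 (trunc_vec F u)"
  unfolding trunc_vec_def by (rule ell2_comparison[where C=1]) auto

lemma ell2_trunc_vec_finite: "finite F \<Longrightarrow> ell2 (trunc_vec F u)"
  unfolding trunc_vec_def by (rule ell2_finite_support[of F]) auto

lemma ell2_basis_vec[simp]: "ell2 (basis_vec k)"
  unfolding basis_vec_def by (rule ell2_finite_support[of "{k}"]) auto

lemma abs_summable_on_ell2_product:
  assumes "ell2 u" "ell2 v" "\<And>i. cmod (f i) \<le> cmod (u i) * cmod (v i)"
  shows "(\<lambda>i. norm (f i)) summable_on UNIV"
proof (rule Infinite_Sum.abs_summable_on_comparison_test')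
  show "(\<lambda>i. (cmod (u i))^2 + (cmod (v i))^2) summable_on UNIV"
    using assms unfolding ell2_def by (intro summable_on_add)
  fix i
  have "2 * (cmod (u i) * cmod (v i)) \<le> (cmod (u i))^2 + (cmod (v i))^2"
    using sum_squares_bound[of "cmod (u i)" "cmod (v i)"] by (simp add: mult.assoc)
  moreover have "0 \<le> cmod (u i) * cmod (v i)" by simp
  ultimately have "cmod (u i) * cmod (v i) \<le> (cmod (u i))^2 + (cmod (v i))^2" by linarith
  then show "norm (f i) \<le> (cmod (u i))^2 + (cmod (v i))^2" using assms(3)[of i] by simp
qed

lemma summable_on_ell2_product:
  assumes "ell2 u" "ell2 v" "\<And>i. cmod (f i) \<le> cmod (u i) * cmod (v i)"
  shows "f summable_on UNIV"
  using abs_summable_on_ell2_product[OF assms] abs_summable_summable by blast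

lemma l2inner_summable: "ell2 u \<Longrightarrow> ell2 v \<Longrightarrow> (\<lambda>i. cnj (u i) * v i) summable_on UNIV"
  by (rule summable_on_ell2_product[of u v]) (auto simp: norm_mult)

lemma infsum_abs_product_le:
  assumes "ell2 u" "ell2 v"
  shows "(\<Sum>\<^sub>\<infinity>i. cmod (u i) * cmod (v i)) \<le> l2norm u * l2norm v"
proof (rule nonneg_summable_on_bounded(2))
  fix F :: "'a set" assume F: "finite F"
  have "(\<Sum>i\<in>F. cmod (u i) * cmod (v i))^2 \<le> (\<Sum>i\<in>F. (cmod (u i))^2) * (\<Sum>i\<in>F. (cmod (v i))^2)"
    by (rule Cauchy_Schwarz_ineq_sum)
  also have "\<dots> \<le> (l2norm u)^2 * (l2norm v)^2"
    by (intro mult_mono sum_le_l2norm_power2 assms F sum_nonneg) auto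
  finally have "(\<Sum>i\<in>F. cmod (u i) * cmod (v i))^2 \<le> (l2norm u * l2norm v)^2"
    by (simp add: power_mult_distrib)
  then show "(\<Sum>i\<in>F. cmod (u i) * cmod (v i)) \<le> l2norm u * l2norm v"
    by (rule power2_le_imp_le) simp
qed auto

lemma norm_infsum_le_l2norm_mult:
  assumes "ell2 u" "ell2 v" "\<And>i. cmod (f i) \<le> cmod (u i) * cmod (v i)"
  shows "cmod (infsum f UNIV) \<le> l2norm u * l2norm v"
proof -
  have "cmod (infsum f UNIV) \<le> (\<Sum>\<^sub>\<infinity>i. cmod (f i))"
    by (rule norm_infsum_bound) (rule abs_summable_on_ell2_product[OF assms])
  also have "\<dots> \<le> (\<Sum>\<^sub>\<infinity>i. cmod (u i) * cmod (v i))"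
  proof (rule infsum_mono)
    show "(\<lambda>i. cmod (u i) * cmod (v i)) summable_on UNIV"
      using abs_summable_on_ell2_product[OF assms(1,2), of "\<lambda>i. of_real (cmod (u i) * cmod (v i))"]
      by (simp add: norm_mult)
  qed (use abs_summable_on_ell2_product[OF assms] assms(3) in auto)
  also have "\<dots> \<le> l2norm u * l2norm v" by (rule infsum_abs_product_le[OF assms(1,2)])
  finally show ?thesis .
qed

lemma l2inner_Cauchy_Schwarz: "ell2 u \<Longrightarrow> ell2 v \<Longrightarrow> cmod (l2inner u v) \<le> l2norm u * l2norm v"
  unfolding l2inner_def by (rule norm_infsum_le_l2norm_mult) (auto simp: norm_mult)

lemma l2inner_add_right:
  "ell2 u \<Longrightarrow> ell2 v \<Longrightarrow> ell2 w \<Longrightarrow> l2inner u (\<lambda>i. v i + w i) = l2inner u v + l2inner u w"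
  unfolding l2inner_def by (simp add: distrib_left infsum_add l2inner_summable)

lemma l2inner_add_left:
  "ell2 u \<Longrightarrow> ell2 v \<Longrightarrow> ell2 w \<Longrightarrow> l2inner (\<lambda>i. u i + v i) w = l2inner u w + l2inner v w"
  unfolding l2inner_def by (simp add: distrib_right infsum_add l2inner_summable)

lemma l2inner_cmult_right: "ell2 u \<Longrightarrow> ell2 v \<Longrightarrow> l2inner u (\<lambda>i. c * v i) = c * l2inner u v"
  unfolding l2inner_def
  by (subst infsum_cmult_right[symmetric]) (auto simp: l2inner_summable mult.left_commute)

lemma l2inner_cmult_left: "ell2 u \<Longrightarrow> ell2 v \<Longrightarrow> l2inner (\<lambda>i. c * u i) v = cnj c * l2inner u v"
  unfolding l2inner_def
  by (subst infsum_cmult_right[symmetric]) (auto simp: l2inner_summable mult.assoc)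

lemma l2inner_uminus_right: "l2inner u (\<lambda>i. - v i) = - l2inner u v"
  unfolding l2inner_def by (simp add: infsum_uminus)

lemma l2inner_uminus_left: "l2inner (\<lambda>i. - u i) v = - l2inner u v"
  unfolding l2inner_def by (simp add: infsum_uminus)

lemma l2inner_diff_right:
  "ell2 u \<Longrightarrow> ell2 v \<Longrightarrow> ell2 w \<Longrightarrow> l2inner u (\<lambda>i. v i - w i) = l2inner u v - l2inner u w"
  using l2inner_add_right[of u v "\<lambda>i. - w i"] l2inner_uminus_right[of u w] ell2_uminus[of w] by simp

lemma l2inner_diff_left:
  "ell2 u \<Longrightarrow> ell2 v \<Longrightarrow> ell2 w \<Longrightarrow> l2inner (\<lambda>i. u i - v i) w = l2inner u w - l2inner v w"
  using l2inner_add_left[of u "\<lambda>i. - v i" w] l2inner_uminus_left[of v w] ell2_uminus[of v] by simp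

lemma l2inner_commute: "l2inner v u = cnj (l2inner u v)"
  unfolding l2inner_def by (simp add: infsum_cnj[symmetric] mult.commute)

lemma cnj_mult_self: "cnj z * z = complex_of_real ((cmod z)^2)"
  using complex_norm_square[of z] by (simp add: mult.commute)

lemma l2inner_self: "ell2 v \<Longrightarrow> l2inner v v = complex_of_real ((l2norm v)^2)"
proof -
  assume v: "ell2 v"
  have "((\<lambda>i. complex_of_real ((cmod (v i))^2)) has_sum complex_of_real (\<Sum>\<^sub>\<infinity>i. (cmod (v i))^2)) UNIV"
    by (rule has_sum_of_real) (use v in \<open>auto simp: ell2_def\<close>)
  then show ?thesis unfolding l2inner_def l2norm_power2 cnj_mult_self by (simp add: infsumI)
qed

lemma l2inner_basis_vec: "l2inner (basis_vec i) w = w i"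
proof -
  have "(\<lambda>j. cnj (basis_vec i j) * w j) = (\<lambda>j. if j \<in> {i} then w j else 0)"
    by (auto simp: basis_vec_def)
  then show ?thesis unfolding l2inner_def using infsum_if_finite[of "{i}" w] by simp
qed

lemma l2inner_trunc_vec_self:
  assumes "finite F" shows "l2inner (trunc_vec F w) w = of_real (\<Sum>i\<in>F. (cmod (w i))^2)"
proof -
  have "l2inner (trunc_vec F w) w = (\<Sum>\<^sub>\<infinity>i. if i \<in> F then cnj (w i) * w i else 0)"
    unfolding l2inner_def trunc_vec_def by (intro infsum_cong) auto
  also have "\<dots> = (\<Sum>i\<in>F. cnj (w i) * w i)" by (rule infsum_if_finite[OF assms])
  finally show ?thesis unfolding cnj_mult_self by simp
qed

lemma l2norm_trunc_vec:
  assumes "finite F" shows "l2norm (trunc_vec F w) = sqrt (\<Sum>i\<in>F. (cmod (w i))^2)"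
proof -
  have "(\<lambda>i. (cmod (trunc_vec F w i))^2) = (\<lambda>i. if i \<in> F then (cmod (w i))^2 else 0)"
    by (auto simp: trunc_vec_def)
  then show ?thesis unfolding l2norm_def using infsum_if_finite[OF assms, of "\<lambda>i. (cmod (w i))^2"] by simp
qed

lemma l2norm_cmult: "ell2 v \<Longrightarrow> l2norm (\<lambda>i. c * v i) = cmod c * l2norm v"
proof -
  assume v: "ell2 v"
  have "(l2norm (\<lambda>i. c * v i))^2 = (\<Sum>\<^sub>\<infinity>i. (cmod c)^2 * (cmod (v i))^2)"
    unfolding l2norm_power2 by (simp add: norm_mult power_mult_distrib)
  also have "\<dots> = (cmod c * l2norm v)^2"
    unfolding l2norm_power2 power_mult_distrib
    by (rule infsum_cmult_right) (use v in \<open>simp add: ell2_def\<close>)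
  finally show ?thesis by (simp add: power2_eq_iff_nonneg)
qed

lemma l2norm_uminus: "l2norm (\<lambda>i. - v i) = l2norm v"
  unfolding l2norm_def by simp

lemma l2norm_add_power2:
  assumes "ell2 u" "ell2 v"
  shows "(l2norm (\<lambda>i. u i + v i))^2 = (l2norm u)^2 + 2 * Re (l2inner u v) + (l2norm v)^2"
proof -
  have uv: "ell2 (\<lambda>i. u i + v i)" using assms by (rule ell2_add)
  have "complex_of_real ((l2norm (\<lambda>i. u i + v i))^2) = l2inner (\<lambda>i. u i + v i) (\<lambda>i. u i + v i)"
    using l2inner_self[OF uv] by simp
  also have "\<dots> = l2inner u u + l2inner u v + l2inner v u + l2inner v v"
    using assms uv by (simp add: l2inner_add_left l2inner_add_right)
  also have "\<dots> = complex_of_real ((l2norm u)^2 + 2 * Re (l2inner u v) + (l2norm v)^2)"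
    using assms by (simp add: l2inner_self l2inner_commute[of v u] complex_eq_iff)
  finally show ?thesis by (simp only: of_real_eq_iff)
qed

lemma l2norm_triangle:
  assumes "ell2 u" "ell2 v"
  shows "l2norm (\<lambda>i. u i + v i) \<le> l2norm u + l2norm v"
proof -
  have "Re (l2inner u v) \<le> l2norm u * l2norm v"
    using l2inner_Cauchy_Schwarz[OF assms] complex_Re_le_cmod order_trans by blast
  then have "(l2norm (\<lambda>i. u i + v i))^2 \<le> (l2norm u + l2norm v)^2"
    using l2norm_add_power2[OF assms] by (simp add: power2_sum)
  then show ?thesis by (rule power2_le_imp_le) simp
qed

lemma l2norm_eq_0: "ell2 v \<Longrightarrow> l2norm v = 0 \<Longrightarrow> v = (\<lambda>i. 0)"
proof
  fix i assume v: "ell2 v" "l2norm v = 0"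
  have "(\<Sum>\<^sub>\<infinity>i. (cmod (v i))^2) \<le> 0" using l2norm_power2[of v] v by simp
  then have "(cmod (v i))^2 = 0"
    by (rule nonneg_infsum_le_0D) (use v in \<open>auto simp: ell2_def\<close>)
  then show "v i = 0" by simp
qed

lemma cmod_le_l2norm: "ell2 v \<Longrightarrow> cmod (v i) \<le> l2norm v"
  using sum_le_l2norm_power2[of v "{i}"] by (auto intro: power2_le_imp_le)

lemma ell2_by_duality:
  assumes M: "0 \<le> M"
    and H: "\<And>F. finite F \<Longrightarrow> cmod (l2inner (trunc_vec F w) w) \<le> M * l2norm (trunc_vec F w)"
  shows "ell2 w" "l2norm w \<le> M"
proof -
  have "(\<Sum>i\<in>F. (cmod (w i))^2) \<le> M^2" if F: "finite F" for F
  proof -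
    define s where "s = (\<Sum>i\<in>F. (cmod (w i))^2)"
    have s0: "0 \<le> s" unfolding s_def by (intro sum_nonneg) auto
    have le: "sqrt s * sqrt s \<le> M * sqrt s"
      using H[OF F] s0 unfolding l2inner_trunc_vec_self[OF F] l2norm_trunc_vec[OF F] s_def[symmetric]
      by simp
    have "sqrt s \<le> M"
    proof (cases "s = 0")
      case False
      then have "0 < sqrt s" using s0 by simp
      then show ?thesis using le by (rule mult_right_le_imp_le[rotated])
    qed (use M in simp)
    then show ?thesis using s0 M unfolding s_def by (metis real_le_lsqrt sqrt_le_D)
  qed
  then show "ell2 w" "l2norm w \<le> M" using ell2_finite_sums_bounded[OF _ M] by auto
qed

lemma trunc_vec_tendsto:
  assumes u: "ell2 u"
  shows "((\<lambda>F. l2norm (\<lambda>i. u i - trunc_vec F u i)) \<longlongrightarrow> 0) (finite_subsets_at_top UNIV)"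
proof -
  define g where "g i = (cmod (u i))^2" for i
  have gs: "g summable_on UNIV" using u unfolding ell2_def g_def .
  have eq: "l2norm (\<lambda>i. u i - trunc_vec F u i) = sqrt (infsum g UNIV - sum g F)" if F: "finite F" for F
  proof -
    have "(\<lambda>i. (cmod (u i - trunc_vec F u i))^2) = (\<lambda>i. g i - (if i \<in> F then g i else 0))"
      by (auto simp: trunc_vec_def g_def)
    moreover have "(\<lambda>i. if i \<in> F then g i else 0) summable_on UNIV"
      by (rule summable_on_finite_support[OF F]) auto
    ultimately show ?thesis
      unfolding l2norm_def using infsum_diff[OF gs] infsum_if_finite[OF F, of g] by simp
  qed
  have "((\<lambda>F. sqrt (infsum g UNIV - sum g F)) \<longlongrightarrow> sqrt (infsum g UNIV - infsum g UNIV))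
      (finite_subsets_at_top UNIV)"
    by (intro tendsto_intros infsum_tendsto[OF gs])
  moreover have "\<forall>\<^sub>F F in finite_subsets_at_top UNIV.
      sqrt (infsum g UNIV - sum g F) = l2norm (\<lambda>i. u i - trunc_vec F u i)"
    by (rule eventually_finite_subsets_at_top_weakI) (simp add: eq)
  ultimately show ?thesis by (simp add: tendsto_cong)
qed

section \<open>Bounded matrices and their adjoints\<close>

lemma bounded_mat_ell2: "bounded_mat A \<Longrightarrow> ell2 v \<Longrightarrow> ell2 (mat_apply A v)"
  unfolding bounded_mat_def by blast

lemma bounded_mat_row_summable: "bounded_mat A \<Longrightarrow> ell2 v \<Longrightarrow> (\<lambda>j. A i j * v j) summable_on UNIV"
  unfolding bounded_mat_def by blast

lemma bounded_mat_bound: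
  assumes "bounded_mat A"
  obtains C where "0 \<le> C" "\<And>v. ell2 v \<Longrightarrow> l2norm (mat_apply A v) \<le> C * l2norm v"
proof -
  obtain C where C: "\<And>v. ell2 v \<Longrightarrow> l2norm (mat_apply A v) \<le> C * l2norm v"
    using assms unfolding bounded_mat_def by blast
  have "l2norm (mat_apply A v) \<le> max C 0 * l2norm v" if "ell2 v" for v
    using order_trans[OF C[OF that] mult_right_mono[OF max.cobounded1 l2norm_nonneg]] .
  then show ?thesis using that[of "max C 0"] by auto
qed

lemma mat_apply_diff:
  assumes "bounded_mat A" "ell2 u" "ell2 v"
  shows "mat_apply A (\<lambda>i. u i - v i) = (\<lambda>i. mat_apply A u i - mat_apply A v i)"
  unfolding mat_apply_def
  by (auto simp: right_diff_distrib intro!: ext infsum_diff bounded_mat_row_summable assms)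

lemma mat_apply_basis_vec: "mat_apply A (basis_vec k) = (\<lambda>i. A i k)"
proof
  fix i
  have "(\<lambda>j. A i j * basis_vec k j) = (\<lambda>j. if j \<in> {k} then A i j else 0)"
    by (auto simp: basis_vec_def)
  then show "mat_apply A (basis_vec k) i = A i k"
    unfolding mat_apply_def using infsum_if_finite[of "{k}" "A i"] by simp
qed

lemma bounded_mat_column_ell2: "bounded_mat A \<Longrightarrow> ell2 (\<lambda>i. A i k)"
  using bounded_mat_ell2[of A "basis_vec k"] by (simp add: mat_apply_basis_vec)

lemma mat_apply_trunc_vec: "finite F \<Longrightarrow> mat_apply A (trunc_vec F u) l = (\<Sum>i\<in>F. A l i * u i)"
  unfolding mat_apply_def trunc_vec_def
  using infsum_if_finite[of F "\<lambda>i. A l i * u i"] by (simp add: if_distrib cong: if_cong)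

lemma adj_adj[simp]: "adj (adj A) = A"
  unfolding adj_def by (auto intro!: ext)

lemma mat_apply_adj: "mat_apply (adj A) z i = l2inner (\<lambda>l. A l i) z"
  unfolding mat_apply_def adj_def l2inner_def ..

lemma mat_mult_adj_entry: "mat_mult (adj A) Y i k = l2inner (\<lambda>l. A l i) (\<lambda>l. Y l k)"
  unfolding mat_mult_def adj_def l2inner_def ..

lemma sum_cnj_mult_l2inner_column:
  assumes A: "bounded_mat A" and z: "ell2 z" and F: "finite F"
  shows "(\<Sum>i\<in>F. cnj (u i) * l2inner (\<lambda>l. A l i) z) = l2inner (mat_apply A (trunc_vec F u)) z"
proof -
  have "(\<Sum>i\<in>F. cnj (u i) * l2inner (\<lambda>l. A l i) z) = (\<Sum>i\<in>F. \<Sum>\<^sub>\<infinity>l. cnj (u i) * (cnj (A l i) * z l))"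
    unfolding l2inner_def
    by (intro sum.cong refl infsum_cmult_right[symmetric] l2inner_summable bounded_mat_column_ell2[OF A] z)
  also have "\<dots> = (\<Sum>\<^sub>\<infinity>l. \<Sum>i\<in>F. cnj (u i) * (cnj (A l i) * z l))"
    by (rule infsum_finite_sum[OF F, symmetric])
      (intro summable_on_cmult_right l2inner_summable bounded_mat_column_ell2[OF A] z)
  also have "\<dots> = l2inner (mat_apply A (trunc_vec F u)) z"
    unfolding l2inner_def mat_apply_trunc_vec[OF F]
    by (intro infsum_cong) (simp add: sum_distrib_right sum_distrib_left mult_ac)
  finally show ?thesis .
qed

text \<open>The adjoint identity \<open>\<langle>u, A\<^sup>* z\<rangle> = \<langle>A u, z\<rangle>\<close>: it holds for finitely supported \<open>u\<close>, and
  the truncations of \<open>u\<close> converge in norm.\<close>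

lemma l2inner_mat_apply_has_sum:
  assumes A: "bounded_mat A" and u: "ell2 u" and z: "ell2 z"
  shows "((\<lambda>i. cnj (u i) * l2inner (\<lambda>l. A l i) z) has_sum l2inner (mat_apply A u) z) UNIV"
proof -
  obtain C where C: "\<And>v. ell2 v \<Longrightarrow> l2norm (mat_apply A v) \<le> C * l2norm v"
    using bounded_mat_bound[OF A] by blast
  define f where "f i = cnj (u i) * l2inner (\<lambda>l. A l i) z" for i
  have fin: "sum f F = l2inner (mat_apply A (trunc_vec F u)) z" if F: "finite F" for F
    unfolding f_def by (rule sum_cnj_mult_l2inner_column[OF A z F])
  have bound: "cmod (sum f F - l2inner (mat_apply A u) z) \<le> C * l2norm z * l2norm (\<lambda>i. u i - trunc_vec F u i)"
    if F: "finite F" for F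
  proof -
    have r: "ell2 (trunc_vec F u)" by (rule ell2_trunc_vec[OF u])
    have d: "ell2 (\<lambda>i. u i - trunc_vec F u i)" using u r by (rule ell2_diff)
    have "sum f F - l2inner (mat_apply A u) z = - l2inner (mat_apply A (\<lambda>i. u i - trunc_vec F u i)) z"
      unfolding fin[OF F] mat_apply_diff[OF A u r]
      using l2inner_diff_left[OF bounded_mat_ell2[OF A u] bounded_mat_ell2[OF A r] z] by simp
    then have "cmod (sum f F - l2inner (mat_apply A u) z)
        \<le> l2norm (mat_apply A (\<lambda>i. u i - trunc_vec F u i)) * l2norm z"
      using l2inner_Cauchy_Schwarz[OF bounded_mat_ell2[OF A d] z] by simp
    also have "\<dots> \<le> (C * l2norm (\<lambda>i. u i - trunc_vec F u i)) * l2norm z"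
      by (rule mult_right_mono[OF C[OF d]]) simp
    finally show ?thesis by (simp add: mult_ac)
  qed
  have "((\<lambda>F. sum f F - l2inner (mat_apply A u) z) \<longlongrightarrow> 0) (finite_subsets_at_top UNIV)"
  proof (rule Lim_null_comparison)
    show "\<forall>\<^sub>F F in finite_subsets_at_top UNIV.
        norm (sum f F - l2inner (mat_apply A u) z) \<le> C * l2norm z * l2norm (\<lambda>i. u i - trunc_vec F u i)"
      by (rule eventually_finite_subsets_at_top_weakI) (simp add: bound)
    show "((\<lambda>F. C * l2norm z * l2norm (\<lambda>i. u i - trunc_vec F u i)) \<longlongrightarrow> 0) (finite_subsets_at_top UNIV)"
      using tendsto_mult_right_zero[OF trunc_vec_tendsto[OF u]] by simp
  qed
  then show ?thesis unfolding has_sum_def f_def by (simp add: Lim_null[symmetric])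
qed

lemma l2inner_mat_apply_adj:
  assumes "bounded_mat A" "ell2 u" "ell2 z"
  shows "l2inner u (mat_apply (adj A) z) = l2inner (mat_apply A u) z"
  using l2inner_mat_apply_has_sum[OF assms] unfolding l2inner_def[of u] mat_apply_adj
  by (simp add: infsumI)

lemma bounded_mat_adj:
  assumes A: "bounded_mat A" shows "bounded_mat (adj A)"
proof -
  obtain C where C0: "0 \<le> C" and C: "\<And>v. ell2 v \<Longrightarrow> l2norm (mat_apply A v) \<le> C * l2norm v"
    using bounded_mat_bound[OF A] by blast
  have "ell2 (mat_apply (adj A) z) \<and> l2norm (mat_apply (adj A) z) \<le> C * l2norm z" if z: "ell2 z" for z
  proof -
    define w where "w = mat_apply (adj A) z"
    have "cmod (l2inner (trunc_vec F w) w) \<le> (C * l2norm z) * l2norm (trunc_vec F w)"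
      if F: "finite F" for F
    proof -
      have r: "ell2 (trunc_vec F w)" by (rule ell2_trunc_vec_finite[OF F])
      have "cmod (l2inner (trunc_vec F w) w) = cmod (l2inner (mat_apply A (trunc_vec F w)) z)"
        using l2inner_mat_apply_adj[OF A r z] w_def by simp
      also have "\<dots> \<le> l2norm (mat_apply A (trunc_vec F w)) * l2norm z"
        by (rule l2inner_Cauchy_Schwarz[OF bounded_mat_ell2[OF A r] z])
      also have "\<dots> \<le> (C * l2norm (trunc_vec F w)) * l2norm z"
        by (rule mult_right_mono[OF C[OF r]]) simp
      finally show ?thesis by (simp add: mult_ac)
    qed
    then show ?thesis using ell2_by_duality[of "C * l2norm z" w] C0 unfolding w_def by simp
  qed
  moreover have "(\<lambda>j. adj A i j * z j) summable_on UNIV" if z: "ell2 z" for i z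
    unfolding adj_def by (rule l2inner_summable[OF bounded_mat_column_ell2[OF A] z])
  ultimately show ?thesis unfolding bounded_mat_def by blast
qed

lemma mat_mult_adj_self_apply:
  assumes A: "bounded_mat A" and w: "ell2 w"
  shows "(\<lambda>m. mat_mult (adj A) A i m * w m) summable_on UNIV"
    "(\<Sum>\<^sub>\<infinity>m. mat_mult (adj A) A i m * w m) = mat_apply (adj A) (mat_apply A w) i"
proof -
  have adjA: "bounded_mat (adj A)" by (rule bounded_mat_adj[OF A])
  define v where "v = mat_apply (adj A) (\<lambda>l. A l i)"
  have v: "ell2 v" unfolding v_def by (rule bounded_mat_ell2[OF adjA bounded_mat_column_ell2[OF A]])
  have e: "mat_mult (adj A) A i m = cnj (v m)" for m
    unfolding mat_mult_adj_entry v_def mat_apply_adj by (simp add: l2inner_commute[of "\<lambda>l. A l i"])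
  show "(\<lambda>m. mat_mult (adj A) A i m * w m) summable_on UNIV"
    unfolding e by (rule l2inner_summable[OF v w])
  have "(\<Sum>\<^sub>\<infinity>m. mat_mult (adj A) A i m * w m) = l2inner v w" unfolding e l2inner_def ..
  also have "\<dots> = l2inner (\<lambda>l. A l i) (mat_apply A w)"
    unfolding v_def using l2inner_mat_apply_adj[OF adjA bounded_mat_column_ell2[OF A] w] by simp
  finally show "(\<Sum>\<^sub>\<infinity>m. mat_mult (adj A) A i m * w m) = mat_apply (adj A) (mat_apply A w) i"
    by (simp add: mat_apply_adj)
qed

lemma mat_apply_gram_partial_sum:
  fixes b :: "nat \<Rightarrow> 'i \<Rightarrow> 'i \<Rightarrow> complex"
  assumes bdd: "\<And>j. bounded_mat (b j)" and w: "ell2 w"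
  shows "mat_apply (\<lambda>r c. \<Sum>j<n. mat_mult (adj (b j)) (b j) r c) w
    = (\<lambda>i. \<Sum>j<n. mat_apply (adj (b j)) (mat_apply (b j) w) i)"
proof
  fix i
  have "mat_apply (\<lambda>r c. \<Sum>j<n. mat_mult (adj (b j)) (b j) r c) w i
      = (\<Sum>\<^sub>\<infinity>m. \<Sum>j<n. mat_mult (adj (b j)) (b j) i m * w m)"
    unfolding mat_apply_def by (simp add: sum_distrib_right)
  also have "\<dots> = (\<Sum>j<n. mat_apply (adj (b j)) (mat_apply (b j) w) i)"
    using mat_mult_adj_self_apply[OF bdd w] by (subst infsum_finite_sum) auto
  finally show "mat_apply (\<lambda>r c. \<Sum>j<n. mat_mult (adj (b j)) (b j) r c) w i
      = (\<Sum>j<n. mat_apply (adj (b j)) (mat_apply (b j) w) i)" .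
qed

lemma sot_sum_id_l2inner_sums:
  assumes bdd: "\<And>j. bounded_mat (b j)" and S: "sot_sum_id (\<lambda>j. mat_mult (adj (b j)) (b j))"
    and u: "ell2 u" and w: "ell2 w"
  shows "(\<lambda>j. l2inner (mat_apply (b j) u) (mat_apply (b j) w)) sums l2inner u w"
proof -
  define p where "p n = (\<lambda>i. \<Sum>j<n. mat_apply (adj (b j)) (mat_apply (b j) w) i)" for n
  have pe: "mat_apply (\<lambda>r c. \<Sum>j<n. mat_mult (adj (b j)) (b j) r c) w = p n" for n
    unfolding p_def by (rule mat_apply_gram_partial_sum[OF bdd w])
  have p: "ell2 (p n)" for n
    unfolding p_def by (rule ell2_sum) (auto intro!: bounded_mat_ell2 bounded_mat_adj bdd w)
  have "(\<lambda>n. l2norm (\<lambda>i. mat_apply (\<lambda>r c. \<Sum>j<n. mat_mult (adj (b j)) (b j) r c) w i - w i)) \<longlonglongrightarrow> 0"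
    using S w unfolding sot_sum_id_def by blast
  then have lim: "(\<lambda>n. l2norm (\<lambda>i. p n i - w i)) \<longlonglongrightarrow> 0" by (simp add: pe)
  have cp: "l2inner u (p n) = (\<Sum>j<n. l2inner (mat_apply (b j) u) (mat_apply (b j) w))" for n
  proof -
    have "l2inner u (p n) = (\<Sum>\<^sub>\<infinity>i. \<Sum>j<n. cnj (u i) * mat_apply (adj (b j)) (mat_apply (b j) w) i)"
      unfolding l2inner_def p_def by (simp add: sum_distrib_left)
    also have "\<dots> = (\<Sum>j<n. l2inner u (mat_apply (adj (b j)) (mat_apply (b j) w)))"
      unfolding l2inner_def
      by (rule infsum_finite_sum) (auto intro!: l2inner_summable u bounded_mat_ell2 bounded_mat_adj bdd w)
    finally show ?thesis
      using l2inner_mat_apply_adj[OF bdd u bounded_mat_ell2[OF bdd w]] by simp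
  qed
  have "(\<lambda>n. l2inner u (p n) - l2inner u w) \<longlonglongrightarrow> 0"
  proof (rule Lim_null_comparison)
    show "\<forall>\<^sub>F n in sequentially. norm (l2inner u (p n) - l2inner u w) \<le> l2norm u * l2norm (\<lambda>i. p n i - w i)"
      using l2inner_Cauchy_Schwarz[OF u ell2_diff[OF p w]] l2inner_diff_right[OF u p w] by simp
    show "(\<lambda>n. l2norm u * l2norm (\<lambda>i. p n i - w i)) \<longlonglongrightarrow> 0"
      using tendsto_mult_right_zero[OF lim] by simp
  qed
  then show ?thesis unfolding sums_def cp[symmetric] by (simp add: Lim_null[symmetric])
qed

lemma sot_sum_id_l2norm_has_sum:
  assumes bdd: "\<And>j. bounded_mat (b j)" and S: "sot_sum_id (\<lambda>j. mat_mult (adj (b j)) (b j))"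
    and u: "ell2 u"
  shows "((\<lambda>j. (l2norm (mat_apply (b j) u))^2) has_sum (l2norm u)^2) UNIV"
proof -
  have "(\<lambda>j. complex_of_real ((l2norm (mat_apply (b j) u))^2)) sums complex_of_real ((l2norm u)^2)"
    using sot_sum_id_l2inner_sums[OF bdd S u u] u by (simp add: l2inner_self bounded_mat_ell2[OF bdd])
  then have "(\<lambda>j. (l2norm (mat_apply (b j) u))^2) sums (l2norm u)^2"
    by (simp only: sums_of_real_iff)
  then show ?thesis by (rule sums_nonneg_imp_has_sum) simp
qed

lemma sot_sum_id_l2inner_has_sum:
  assumes bdd: "\<And>j. bounded_mat (b j)" and S: "sot_sum_id (\<lambda>j. mat_mult (adj (b j)) (b j))"
    and u: "ell2 u" and w: "ell2 w"
  shows "((\<lambda>j. l2inner (mat_apply (b j) u) (mat_apply (b j) w)) has_sum l2inner u w) UNIV"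
proof (rule norm_summable_imp_has_sum)
  show "(\<lambda>j. l2inner (mat_apply (b j) u) (mat_apply (b j) w)) sums l2inner u w"
    by (rule sot_sum_id_l2inner_sums[OF assms])
  define \<alpha> where "\<alpha> v j = complex_of_real (l2norm (mat_apply (b j) v))" for v j
  have \<alpha>: "ell2 (\<alpha> v)" if "ell2 v" for v
    using sot_sum_id_l2norm_has_sum[OF bdd S that] unfolding ell2_def \<alpha>_def
    by (simp add: has_sum_iff)
  have "cmod (l2inner (mat_apply (b j) u) (mat_apply (b j) w)) \<le> cmod (\<alpha> u j) * cmod (\<alpha> w j)" for j
    using l2inner_Cauchy_Schwarz[OF bounded_mat_ell2[OF bdd u] bounded_mat_ell2[OF bdd w]]
    by (simp add: \<alpha>_def)
  then have "(\<lambda>j. norm (l2inner (mat_apply (b j) u) (mat_apply (b j) w))) summable_on UNIV"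
    by (rule abs_summable_on_ell2_product[OF \<alpha>[OF u] \<alpha>[OF w]])
  then show "summable (\<lambda>j. norm (l2inner (mat_apply (b j) u) (mat_apply (b j) w)))"
    by (rule summable_on_imp_summable)
qed

section \<open>Hilbert--Schmidt matrices\<close>

definition entries :: "('r \<Rightarrow> 'c \<Rightarrow> complex) \<Rightarrow> 'r \<times> 'c \<Rightarrow> complex" where
  "entries x = (\<lambda>p. x (fst p) (snd p))"

definition mat_transpose :: "('r \<Rightarrow> 'c \<Rightarrow> complex) \<Rightarrow> 'c \<Rightarrow> 'r \<Rightarrow> complex" where
  "mat_transpose x = (\<lambda>i k. x k i)"

definition mat_cnj :: "('r \<Rightarrow> 'c \<Rightarrow> complex) \<Rightarrow> 'r \<Rightarrow> 'c \<Rightarrow> complex" where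
  "mat_cnj x = (\<lambda>i k. cnj (x i k))"

lemma hs2_eq_l2norm: "hs2 x = (if ell2 (entries x) then ennreal ((l2norm (entries x))^2) else \<infinity>)"
  unfolding hs2_def ell2_def entries_def
  using infsum_ennreal_eq[of "\<lambda>p. (cmod (x (fst p) (snd p)))^2"] by (simp add: l2norm_power2)

lemma is_HS_iff_ell2: "is_HS x \<longleftrightarrow> ell2 (entries x)"
  unfolding is_HS_def hs2_eq_l2norm by simp

lemma hs2_finite_iff_ell2: "hs2 x < \<infinity> \<longleftrightarrow> ell2 (entries x)"
  unfolding hs2_eq_l2norm by simp

lemma hs_norm_eq_l2norm: "hs_norm x = l2norm (entries x)"
proof (cases "ell2 (entries x)")
  case False
  then have "l2norm (entries x) = 0" unfolding l2norm_def ell2_def by (simp add: infsum_not_exists)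
  with False show ?thesis unfolding hs_norm_def hs2_eq_l2norm by simp
qed (simp add: hs_norm_def hs2_eq_l2norm)

lemma hs_norm_nonneg[simp]: "0 \<le> hs_norm x"
  unfolding hs_norm_eq_l2norm by simp

lemma entries_diff: "entries (\<lambda>i k. P i k - Q i k) = (\<lambda>p. entries P p - entries Q p)"
  unfolding entries_def ..

lemma entries_lincomb: "entries (\<lambda>i k. p * x i k + q * y i k) = (\<lambda>z. p * entries x z + q * entries y z)"
  unfolding entries_def ..

lemma ell2_entries_lincomb:
  "ell2 (entries x) \<Longrightarrow> ell2 (entries y) \<Longrightarrow> ell2 (entries (\<lambda>i k. p * x i k + q * y i k))"
  unfolding entries_lincomb by (intro ell2_add ell2_cmult)

lemma hs_norm_lincomb_le:
  assumes x: "ell2 (entries x)" and y: "ell2 (entries y)"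
  shows "hs_norm (\<lambda>i k. p * x i k + q * y i k) \<le> cmod p * hs_norm x + cmod q * hs_norm y"
  unfolding hs_norm_eq_l2norm entries_lincomb
  using l2norm_triangle[OF ell2_cmult[OF x] ell2_cmult[OF y]] by (simp add: l2norm_cmult x y)

lemma hs_norm_cmult: "ell2 (entries x) \<Longrightarrow> hs_norm (\<lambda>i k. p * x i k) = cmod p * hs_norm x"
  using l2norm_cmult[of "entries x" p] unfolding hs_norm_eq_l2norm by (simp add: entries_def)

lemma hs_norm_rows:
  assumes x: "ell2 (entries x)"
  shows "\<And>i. ell2 (\<lambda>k. x i k)" "((\<lambda>i. (l2norm (\<lambda>k. x i k))^2) has_sum (hs_norm x)^2) UNIV"
proof -
  define g where "g p = (cmod (entries x p))^2" for p
  have s: "g summable_on UNIV" using x unfolding g_def ell2_def .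
  show "ell2 (\<lambda>k. x i k)" for i
    using summable_on_pairs_imp_rows(1)[OF s, of i] unfolding ell2_def g_def entries_def by simp
  have "(\<Sum>\<^sub>\<infinity>b. g (a, b)) = (l2norm (\<lambda>k. x a k))^2" for a
    unfolding l2norm_power2 g_def entries_def by simp
  moreover have "infsum g UNIV = (hs_norm x)^2" unfolding hs_norm_eq_l2norm l2norm_power2 g_def ..
  ultimately show "((\<lambda>i. (l2norm (\<lambda>k. x i k))^2) has_sum (hs_norm x)^2) UNIV"
    using summable_on_pairs_imp_rows(2)[OF s] by simp
qed

lemma ell2_entries_from_rows:
  assumes r: "\<And>i. ell2 (\<lambda>k. x i k)" and s: "((\<lambda>i. (l2norm (\<lambda>k. x i k))^2) has_sum S) UNIV"
  shows "ell2 (entries x)" "(hs_norm x)^2 = S"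
proof -
  have h: "((\<lambda>b. (cmod (entries x (a, b)))^2) has_sum (l2norm (\<lambda>k. x a k))^2) UNIV" for a
    using r[of a] unfolding entries_def ell2_def l2norm_power2 by (simp add: has_sum_infsum)
  show x: "ell2 (entries x)"
    unfolding ell2_def by (rule summable_on_pairs_from_rows[OF _ h]) (use s in \<open>auto simp: has_sum_iff\<close>)
  show "(hs_norm x)^2 = S" using hs_norm_rows(2)[OF x] s by (simp add: has_sum_iff)
qed

lemma ell2_entries_transpose: "ell2 (entries (mat_transpose x)) \<longleftrightarrow> ell2 (entries x)"
  unfolding ell2_def entries_def mat_transpose_def
  using summable_on_UNIV_swap[of "\<lambda>p. (cmod (x (fst p) (snd p)))^2"] by (simp add: case_prod_unfold)

lemma hs_norm_transpose: "hs_norm (mat_transpose x) = hs_norm x"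
  unfolding hs_norm_eq_l2norm l2norm_def entries_def mat_transpose_def
  using infsum_UNIV_swap[of "\<lambda>p. (cmod (x (fst p) (snd p)))^2"] by (simp add: case_prod_unfold)

lemma hs_norm_columns:
  assumes x: "ell2 (entries x)"
  shows "\<And>k. ell2 (\<lambda>i. x i k)" "((\<lambda>k. (l2norm (\<lambda>i. x i k))^2) has_sum (hs_norm x)^2) UNIV"
  using hs_norm_rows[of "mat_transpose x"] x
  unfolding ell2_entries_transpose hs_norm_transpose by (auto simp: mat_transpose_def)

lemma ell2_entries_from_columns:
  assumes "\<And>k. ell2 (\<lambda>i. x i k)" and "((\<lambda>k. (l2norm (\<lambda>i. x i k))^2) has_sum S) UNIV"
  shows "ell2 (entries x)" "(hs_norm x)^2 = S"
  using ell2_entries_from_rows[of "mat_transpose x" S] assms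
  unfolding ell2_entries_transpose hs_norm_transpose by (auto simp: mat_transpose_def)

lemma ell2_entries_mat_cnj: "ell2 (entries (mat_cnj x)) \<longleftrightarrow> ell2 (entries x)"
  unfolding ell2_def entries_def mat_cnj_def by simp

lemma hs_norm_mat_cnj: "hs_norm (mat_cnj x) = hs_norm x"
  unfolding hs_norm_eq_l2norm entries_def mat_cnj_def l2norm_def by simp

lemma adj_eq_mat_cnj_transpose: "adj x = mat_cnj (mat_transpose x)"
  unfolding adj_def mat_cnj_def mat_transpose_def ..

lemma ell2_entries_adj: "ell2 (entries (adj x)) \<longleftrightarrow> ell2 (entries x)"
  unfolding adj_eq_mat_cnj_transpose ell2_entries_mat_cnj ell2_entries_transpose ..

lemma hs_norm_adj: "hs_norm (adj x) = hs_norm x"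
  unfolding adj_eq_mat_cnj_transpose hs_norm_mat_cnj hs_norm_transpose ..

lemma l2inner_entries_by_columns:
  assumes P: "ell2 (entries P)" and Q: "ell2 (entries Q)"
  shows "l2inner (entries P) (entries Q) = (\<Sum>\<^sub>\<infinity>k. l2inner (\<lambda>i. P i k) (\<lambda>i. Q i k))"
proof -
  define f where "f p = cnj (entries P p) * entries Q p" for p
  have fs: "(\<lambda>(k, i). f (i, k)) summable_on UNIV \<times> UNIV"
    using summable_on_UNIV_swap[of f] l2inner_summable[OF P Q] unfolding f_def by simp
  have "l2inner (entries P) (entries Q) = infsum (\<lambda>(k, i). f (i, k)) (UNIV \<times> UNIV)"
    using infsum_UNIV_swap[of f] unfolding l2inner_def f_def by simp
  also have "\<dots> = (\<Sum>\<^sub>\<infinity>k. \<Sum>\<^sub>\<infinity>i. f (i, k))"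
    by (rule infsum_Sigma'_banach[OF fs, symmetric])
  finally show ?thesis unfolding f_def l2inner_def entries_def by simp
qed

lemma mat_mult_eq_columns: "mat_mult A x = (\<lambda>i k. mat_apply A (\<lambda>l. x l k) i)"
  unfolding mat_mult_def mat_apply_def ..

lemma mat_mult_eq_adj_columns:
  "mat_mult x A = mat_transpose (mat_cnj (\<lambda>k i. mat_apply (adj A) (\<lambda>l. cnj (x i l)) k))"
  unfolding mat_mult_def mat_apply_def mat_transpose_def mat_cnj_def adj_def
  by (auto intro!: ext simp: infsum_cnj[symmetric] mult.commute)

lemma hs_norm_columnwise_has_sum:
  assumes bdd: "\<And>j. bounded_mat (b j)" and S: "sot_sum_id (\<lambda>j. mat_mult (adj (b j)) (b j))"
    and y: "ell2 (entries y)"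
  shows "\<And>j. ell2 (entries (\<lambda>i k. mat_apply (b j) (\<lambda>l. y l k) i))"
    "((\<lambda>j. (hs_norm (\<lambda>i k. mat_apply (b j) (\<lambda>l. y l k) i))^2) has_sum (hs_norm y)^2) UNIV"
proof -
  define g where "g p = (l2norm (mat_apply (b (fst p)) (\<lambda>l. y l (snd p))))^2" for p
  have col: "ell2 (\<lambda>l. y l k)" for k by (rule hs_norm_columns(1)[OF y])
  have hk: "((\<lambda>j. g (j, k)) has_sum (l2norm (\<lambda>l. y l k))^2) UNIV" for k
    unfolding g_def using sot_sum_id_l2norm_has_sum[OF bdd S col] by simp
  have g'sum: "(\<lambda>(k, j). g (j, k)) summable_on UNIV"
    by (rule summable_on_pairs_from_rows[where h="\<lambda>k. (l2norm (\<lambda>l. y l k))^2"])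
      (use hk hs_norm_columns(2)[OF y] in \<open>auto simp: g_def has_sum_iff\<close>)
  have gsum: "g summable_on UNIV" using summable_on_UNIV_swap[of g] g'sum by simp
  have "infsum g UNIV = (\<Sum>\<^sub>\<infinity>k. \<Sum>\<^sub>\<infinity>j. g (j, k))"
    using infsum_UNIV_swap[of g] summable_on_pairs_imp_rows(2)[OF g'sum] by (simp add: has_sum_iff)
  also have "\<dots> = (hs_norm y)^2" using hk hs_norm_columns(2)[OF y] by (simp add: has_sum_iff)
  finally have tot: "infsum g UNIV = (hs_norm y)^2" .
  have "ell2 (entries (\<lambda>i k. mat_apply (b j) (\<lambda>l. y l k) i)) \<and>
      (hs_norm (\<lambda>i k. mat_apply (b j) (\<lambda>l. y l k) i))^2 = (\<Sum>\<^sub>\<infinity>k. g (j, k))" for j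
    using ell2_entries_from_columns[of "\<lambda>i k. mat_apply (b j) (\<lambda>l. y l k) i" "\<Sum>\<^sub>\<infinity>k. g (j, k)"]
      bounded_mat_ell2[OF bdd col] summable_on_pairs_imp_rows(1)[OF gsum, of j]
    unfolding g_def by simp
  then show "\<And>j. ell2 (entries (\<lambda>i k. mat_apply (b j) (\<lambda>l. y l k) i))"
    "((\<lambda>j. (hs_norm (\<lambda>i k. mat_apply (b j) (\<lambda>l. y l k) i))^2) has_sum (hs_norm y)^2) UNIV"
    using summable_on_pairs_imp_rows(2)[OF gsum] tot by simp_all
qed

lemma hs_norm_mult_left_has_sum:
  assumes "\<And>j. bounded_mat (a j)" "sot_sum_id (\<lambda>j. mat_mult (adj (a j)) (a j))"
    and "ell2 (entries x)"
  shows "\<And>j. ell2 (entries (mat_mult (a j) x))"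
    "((\<lambda>j. (hs_norm (mat_mult (a j) x))^2) has_sum (hs_norm x)^2) UNIV"
  using hs_norm_columnwise_has_sum[OF assms] unfolding mat_mult_eq_columns by auto

lemma hs_norm_mult_right_has_sum:
  assumes bdd: "\<And>j. bounded_mat (a j)" and S2: "sot_sum_id (\<lambda>j. mat_mult (a j) (adj (a j)))"
    and x: "ell2 (entries x)"
  shows "\<And>j. ell2 (entries (mat_mult x (a j)))"
    "((\<lambda>j. (hs_norm (mat_mult x (a j)))^2) has_sum (hs_norm x)^2) UNIV"
proof -
  have y: "ell2 (entries (mat_transpose (mat_cnj x)))"
    using x by (simp add: ell2_entries_transpose ell2_entries_mat_cnj)
  have e: "(\<lambda>k i. mat_apply (adj (a j)) (\<lambda>l. cnj (x i l)) k)
      = (\<lambda>i k. mat_apply (adj (a j)) (\<lambda>l. mat_transpose (mat_cnj x) l k) i)" for j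
    unfolding mat_transpose_def mat_cnj_def ..
  note h = hs_norm_columnwise_has_sum[of "\<lambda>j. adj (a j)", OF bounded_mat_adj[OF bdd] _ y]
  show "ell2 (entries (mat_mult x (a j)))" for j
    using h(1) S2 unfolding mat_mult_eq_adj_columns e
    by (simp add: ell2_entries_transpose ell2_entries_mat_cnj)
  show "((\<lambda>j. (hs_norm (mat_mult x (a j)))^2) has_sum (hs_norm x)^2) UNIV"
    using h(2) S2 unfolding mat_mult_eq_adj_columns e by (simp add: hs_norm_transpose hs_norm_mat_cnj)
qed

lemma column_norms_has_sum:
  assumes Y: "\<And>j. ell2 (entries (Y j))" and W: "((\<lambda>j. (hs_norm (Y j))^2) has_sum W2) UNIV"
  obtains Wk where "\<And>k. ((\<lambda>j. (l2norm (\<lambda>l. Y j l k))^2) has_sum Wk k) UNIV" "(Wk has_sum W2) UNIV"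
proof -
  define g where "g p = (l2norm (\<lambda>l. Y (fst p) l (snd p)))^2" for p
  have gs: "g summable_on UNIV"
    by (rule summable_on_pairs_from_rows[where h="\<lambda>j. (hs_norm (Y j))^2"])
      (use hs_norm_columns(2)[OF Y] W in \<open>auto simp: g_def has_sum_iff\<close>)
  have g'sum: "(\<lambda>(k, j). g (j, k)) summable_on UNIV" using summable_on_UNIV_swap[of g] gs by simp
  have "infsum g UNIV = W2"
    using summable_on_pairs_imp_rows(2)[OF gs] hs_norm_columns(2)[OF Y] W
    by (simp add: g_def has_sum_iff)
  then have "((\<lambda>k. \<Sum>\<^sub>\<infinity>j. g (j, k)) has_sum W2) UNIV"
    using summable_on_pairs_imp_rows(2)[OF g'sum] infsum_UNIV_swap[of g] by simp
  moreover have "((\<lambda>j. (l2norm (\<lambda>l. Y j l k))^2) has_sum (\<Sum>\<^sub>\<infinity>j. g (j, k))) UNIV" for k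
    using summable_on_pairs_imp_rows(1)[OF g'sum, of k] by (simp add: g_def has_sum_infsum)
  ultimately show ?thesis by (rule that[rotated])
qed

section \<open>The row operator \<open>a\<^sup>*\<close>\<close>

text \<open>\<open>row_apply a w\<close> is \<open>\<Sum>\<^sub>j a\<^sub>j\<^sup>* w\<^sub>j\<close> for \<open>w \<in> H\<^sup>\<infinity>\<close>, and \<open>row_mult a Y\<close> is \<open>\<Sum>\<^sub>j a\<^sub>j\<^sup>* Y\<^sub>j\<close>
  for a family of matrices; both sums are taken entrywise.\<close>

definition row_apply :: "(nat \<Rightarrow> 'i \<Rightarrow> 'i \<Rightarrow> complex) \<Rightarrow> (nat \<Rightarrow> 'i \<Rightarrow> complex) \<Rightarrow> 'i \<Rightarrow> complex" where
  "row_apply a w = (\<lambda>i. \<Sum>\<^sub>\<infinity>j. l2inner (\<lambda>l. a j l i) (w j))"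

definition row_mult ::
  "(nat \<Rightarrow> 'i \<Rightarrow> 'i \<Rightarrow> complex) \<Rightarrow> (nat \<Rightarrow> 'i \<Rightarrow> 'i \<Rightarrow> complex) \<Rightarrow> 'i \<Rightarrow> 'i \<Rightarrow> complex" where
  "row_mult a Y = (\<lambda>i k. \<Sum>\<^sub>\<infinity>j. mat_mult (adj (a j)) (Y j) i k)"

lemma eq_zero_by_tails:
  fixes D :: "('i \<Rightarrow> complex) \<Rightarrow> complex"
  assumes v: "ell2 v"
    and tail: "\<And>F. finite F \<Longrightarrow> D v = D (\<lambda>i. v i - trunc_vec F v i)"
    and bound: "\<And>u. ell2 u \<Longrightarrow> cmod (D u) \<le> K * l2norm u"
  shows "D v = 0"
proof -
  have "((\<lambda>F. D v) \<longlongrightarrow> 0) (finite_subsets_at_top (UNIV :: 'i set))"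
  proof (rule Lim_null_comparison[where g="\<lambda>F. K * l2norm (\<lambda>i. v i - trunc_vec F v i)"])
    show "\<forall>\<^sub>F F in finite_subsets_at_top UNIV. norm (D v) \<le> K * l2norm (\<lambda>i. v i - trunc_vec F v i)"
      by (rule eventually_finite_subsets_at_top_weakI)
        (use tail bound ell2_diff[OF v ell2_trunc_vec[OF v]] in auto)
    show "((\<lambda>F. K * l2norm (\<lambda>i. v i - trunc_vec F v i)) \<longlongrightarrow> 0) (finite_subsets_at_top UNIV)"
      using tendsto_mult_right_zero[OF trunc_vec_tendsto[OF v]] by simp
  qed
  then show ?thesis by (simp add: tendsto_const_iff finite_subsets_at_top_neq_bot)
qed

context
  fixes a :: "nat \<Rightarrow> 'i \<Rightarrow> 'i \<Rightarrow> complex" and w :: "nat \<Rightarrow> 'i \<Rightarrow> complex" and W2 :: real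
  assumes bdd: "\<And>j. bounded_mat (a j)" and S1: "sot_sum_id (\<lambda>j. mat_mult (adj (a j)) (a j))"
    and w: "\<And>j. ell2 (w j)" and W: "((\<lambda>j. (l2norm (w j))^2) has_sum W2) UNIV"
begin

lemma row_apply_pairing:
  assumes v: "ell2 v"
  shows "(\<lambda>j. l2inner (mat_apply (a j) v) (w j)) summable_on UNIV"
    "cmod (\<Sum>\<^sub>\<infinity>j. l2inner (mat_apply (a j) v) (w j)) \<le> l2norm v * sqrt W2"
proof -
  define \<alpha> where "\<alpha> j = complex_of_real (l2norm (mat_apply (a j) v))" for j
  define \<beta> where "\<beta> j = complex_of_real (l2norm (w j))" for j
  have \<alpha>: "ell2 \<alpha>" "l2norm \<alpha> = l2norm v"
    using sot_sum_id_l2norm_has_sum[OF bdd S1 v] unfolding ell2_def l2norm_def[of \<alpha>] \<alpha>_def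
    by (simp_all add: has_sum_iff)
  have \<beta>: "ell2 \<beta>" "l2norm \<beta> = sqrt W2"
    using W unfolding ell2_def l2norm_def[of \<beta>] \<beta>_def by (simp_all add: has_sum_iff)
  have le: "cmod (l2inner (mat_apply (a j) v) (w j)) \<le> cmod (\<alpha> j) * cmod (\<beta> j)" for j
    using l2inner_Cauchy_Schwarz[OF bounded_mat_ell2[OF bdd v] w] by (simp add: \<alpha>_def \<beta>_def)
  show "(\<lambda>j. l2inner (mat_apply (a j) v) (w j)) summable_on UNIV"
    by (rule summable_on_ell2_product[OF \<alpha>(1) \<beta>(1) le])
  show "cmod (\<Sum>\<^sub>\<infinity>j. l2inner (mat_apply (a j) v) (w j)) \<le> l2norm v * sqrt W2"
    using norm_infsum_le_l2norm_mult[OF \<alpha>(1) \<beta>(1) le] \<alpha>(2) \<beta>(2) by simp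
qed

lemma row_apply_summable: "(\<lambda>j. l2inner (\<lambda>l. a j l i) (w j)) summable_on UNIV"
  using row_apply_pairing(1)[OF ell2_basis_vec[of i]] by (simp add: mat_apply_basis_vec)

lemma l2inner_trunc_vec_row_apply:
  assumes F: "finite F"
  shows "l2inner (trunc_vec F u) (row_apply a w) = (\<Sum>\<^sub>\<infinity>j. l2inner (mat_apply (a j) (trunc_vec F u)) (w j))"
proof -
  have trunc_sum: "(\<Sum>\<^sub>\<infinity>i. cnj (trunc_vec F u i) * f i) = (\<Sum>i\<in>F. cnj (u i) * f i)" for f
  proof -
    have "(\<Sum>\<^sub>\<infinity>i. cnj (trunc_vec F u i) * f i) = (\<Sum>\<^sub>\<infinity>i. if i \<in> F then cnj (u i) * f i else 0)"
      by (intro infsum_cong) (simp add: trunc_vec_def)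
    then show ?thesis using infsum_if_finite[OF F, of "\<lambda>i. cnj (u i) * f i"] by simp
  qed
  have "l2inner (trunc_vec F u) (row_apply a w) = (\<Sum>i\<in>F. \<Sum>\<^sub>\<infinity>j. cnj (u i) * l2inner (\<lambda>l. a j l i) (w j))"
    unfolding l2inner_def[of "trunc_vec F u"] trunc_sum unfolding row_apply_def
    by (intro sum.cong refl infsum_cmult_right[symmetric] row_apply_summable)
  also have "\<dots> = (\<Sum>\<^sub>\<infinity>j. \<Sum>i\<in>F. cnj (u i) * l2inner (\<lambda>l. a j l i) (w j))"
    by (rule infsum_finite_sum[OF F, symmetric]) (intro summable_on_cmult_right row_apply_summable)
  also have "\<dots> = (\<Sum>\<^sub>\<infinity>j. l2inner (mat_apply (a j) (trunc_vec F u)) (w j))"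
    using l2inner_mat_apply_has_sum[OF bdd ell2_trunc_vec_finite[OF F] w]
    by (intro infsum_cong) (simp add: trunc_sum[symmetric] infsumI)
  finally show ?thesis .
qed

lemma row_apply_ell2: "ell2 (row_apply a w)" and l2norm_row_apply_le: "l2norm (row_apply a w) \<le> sqrt W2"
proof -
  have "cmod (l2inner (trunc_vec F (row_apply a w)) (row_apply a w))
      \<le> sqrt W2 * l2norm (trunc_vec F (row_apply a w))" if F: "finite F" for F
    using l2inner_trunc_vec_row_apply[OF F] row_apply_pairing(2)[OF ell2_trunc_vec_finite[OF F]]
    by (simp add: mult.commute)
  then show "ell2 (row_apply a w)" "l2norm (row_apply a w) \<le> sqrt W2"
    using ell2_by_duality[of "sqrt W2"] has_sum_nonneg[OF W, simplified] by auto
qed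

lemma l2inner_row_apply_has_sum:
  assumes v: "ell2 v"
  shows "((\<lambda>j. l2inner (mat_apply (a j) v) (w j)) has_sum l2inner v (row_apply a w)) UNIV"
proof -
  define D where "D u = (\<Sum>\<^sub>\<infinity>j. l2inner (mat_apply (a j) u) (w j)) - l2inner u (row_apply a w)" for u
  have "D v = 0"
  proof (rule eq_zero_by_tails[OF v])
    show "cmod (D u) \<le> (sqrt W2 + l2norm (row_apply a w)) * l2norm u" if u: "ell2 u" for u
    proof -
      have "cmod (D u) \<le> cmod (\<Sum>\<^sub>\<infinity>j. l2inner (mat_apply (a j) u) (w j)) + cmod (l2inner u (row_apply a w))"
        unfolding D_def by (rule norm_triangle_ineq4)
      also have "\<dots> \<le> l2norm u * sqrt W2 + l2norm u * l2norm (row_apply a w)"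
        by (intro add_mono row_apply_pairing(2)[OF u] l2inner_Cauchy_Schwarz[OF u row_apply_ell2])
      finally show ?thesis by (simp add: algebra_simps)
    qed
    fix F :: "'i set" assume F: "finite F"
    have r: "ell2 (trunc_vec F v)" by (rule ell2_trunc_vec[OF v])
    have "l2inner (mat_apply (a j) (\<lambda>i. v i - trunc_vec F v i)) (w j)
        = l2inner (mat_apply (a j) v) (w j) - l2inner (mat_apply (a j) (trunc_vec F v)) (w j)" for j
      unfolding mat_apply_diff[OF bdd v r]
      by (rule l2inner_diff_left[OF bounded_mat_ell2[OF bdd v] bounded_mat_ell2[OF bdd r] w])
    then have "D (\<lambda>i. v i - trunc_vec F v i) = D v - D (trunc_vec F v)"
      unfolding D_def l2inner_diff_left[OF v r row_apply_ell2]
      by (simp add: infsum_diff[OF row_apply_pairing(1)[OF v] row_apply_pairing(1)[OF r]])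
    moreover have "D (trunc_vec F v) = 0"
      unfolding D_def using l2inner_trunc_vec_row_apply[OF F] by simp
    ultimately show "D v = D (\<lambda>i. v i - trunc_vec F v i)" by simp
  qed
  then show ?thesis using row_apply_pairing(1)[OF v] unfolding D_def by (simp add: has_sum_iff)
qed

end

context
  fixes a :: "nat \<Rightarrow> 'i \<Rightarrow> 'i \<Rightarrow> complex" and Y :: "nat \<Rightarrow> 'i \<Rightarrow> 'i \<Rightarrow> complex" and W2 :: real
  assumes bdd: "\<And>j. bounded_mat (a j)" and S1: "sot_sum_id (\<lambda>j. mat_mult (adj (a j)) (a j))"
    and Y: "\<And>j. ell2 (entries (Y j))" and W: "((\<lambda>j. (hs_norm (Y j))^2) has_sum W2) UNIV"
begin

lemma row_mult_column: "(\<lambda>i. row_mult a Y i k) = row_apply a (\<lambda>j l. Y j l k)"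
  unfolding row_mult_def row_apply_def mat_mult_adj_entry ..

lemma row_mult_summable: "(\<lambda>j. mat_mult (adj (a j)) (Y j) i k) summable_on UNIV"
proof -
  obtain Wk where "((\<lambda>j. (l2norm (\<lambda>l. Y j l k))^2) has_sum Wk k) UNIV"
    using column_norms_has_sum[OF Y W] by blast
  then show ?thesis
    unfolding mat_mult_adj_entry by (rule row_apply_summable[OF bdd S1 hs_norm_columns(1)[OF Y]])
qed

lemma l2inner_row_mult_column_has_sum:
  assumes v: "ell2 v"
  shows "((\<lambda>j. l2inner (mat_apply (a j) v) (\<lambda>l. Y j l k)) has_sum l2inner v (\<lambda>i. row_mult a Y i k)) UNIV"
proof -
  obtain Wk where "((\<lambda>j. (l2norm (\<lambda>l. Y j l k))^2) has_sum Wk k) UNIV"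
    using column_norms_has_sum[OF Y W] by blast
  then show ?thesis
    unfolding row_mult_column by (rule l2inner_row_apply_has_sum[OF bdd S1 hs_norm_columns(1)[OF Y] _ v])
qed

lemma row_mult_HS: "ell2 (entries (row_mult a Y))" and hs_norm_row_mult_le: "(hs_norm (row_mult a Y))^2 \<le> W2"
proof -
  obtain Wk where Wk: "\<And>k. ((\<lambda>j. (l2norm (\<lambda>l. Y j l k))^2) has_sum Wk k) UNIV" and Wk_sum: "(Wk has_sum W2) UNIV"
    using column_norms_has_sum[OF Y W] by blast
  note col = hs_norm_columns(1)[OF Y]
  have col_ell2: "ell2 (\<lambda>i. row_mult a Y i k)" for k
    unfolding row_mult_column by (rule row_apply_ell2[OF bdd S1 col Wk])
  have col_norm: "(l2norm (\<lambda>i. row_mult a Y i k))^2 \<le> Wk k" for k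
    using l2norm_row_apply_le[OF bdd S1 col Wk, of k] has_sum_nonneg[OF Wk[of k], simplified]
    unfolding row_mult_column by (metis l2norm_nonneg power_mono real_sqrt_pow2)
  have s: "(\<lambda>k. (l2norm (\<lambda>i. row_mult a Y i k))^2) summable_on UNIV"
    by (rule summable_on_comparison_test[of Wk]) (use Wk_sum col_norm in \<open>auto simp: has_sum_iff\<close>)
  note h = ell2_entries_from_columns[of "row_mult a Y", OF col_ell2 has_sum_infsum[OF s]]
  show "ell2 (entries (row_mult a Y))" by (rule h(1))
  have "(hs_norm (row_mult a Y))^2 = (\<Sum>\<^sub>\<infinity>k. (l2norm (\<lambda>i. row_mult a Y i k))^2)" by (rule h(2))
  also have "\<dots> \<le> infsum Wk UNIV"
    by (rule infsum_mono[OF s]) (use Wk_sum col_norm in \<open>auto simp: has_sum_iff\<close>)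
  also have "\<dots> = W2" using Wk_sum by (simp add: has_sum_iff)
  finally show "(hs_norm (row_mult a Y))^2 \<le> W2" .
qed

end

section \<open>The map \<open>\<Psi>\<close> on Hilbert--Schmidt matrices\<close>

context
  fixes a :: "nat \<Rightarrow> 'i \<Rightarrow> 'i \<Rightarrow> complex" and x :: "'i \<Rightarrow> 'i \<Rightarrow> complex"
  assumes bdd: "\<And>j. bounded_mat (a j)" and S1: "sot_sum_id (\<lambda>j. mat_mult (adj (a j)) (a j))"
    and S2: "sot_sum_id (\<lambda>j. mat_mult (a j) (adj (a j)))"
    and x: "ell2 (entries x)"
begin

lemma mult_right_HS: "ell2 (entries (mat_mult x (a j)))"
  and hs_norm_mult_right: "((\<lambda>j. (hs_norm (mat_mult x (a j)))^2) has_sum (hs_norm x)^2) UNIV"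
  using hs_norm_mult_right_has_sum[OF bdd S2 x] by blast+

lemma mult_left_HS: "ell2 (entries (mat_mult (a j) x))"
  and hs_norm_mult_left: "((\<lambda>j. (hs_norm (mat_mult (a j) x))^2) has_sum (hs_norm x)^2) UNIV"
  using hs_norm_mult_left_has_sum[OF bdd S1 x] by blast+

lemma Psi_eq_row_mult: "Psi a x = row_mult a (\<lambda>j. mat_mult x (a j))"
  unfolding Psi_def row_mult_def
  using row_mult_summable[OF bdd S1 mult_right_HS hs_norm_mult_right]
  by (intro ext) (simp add: suminf_eq_infsum)

lemma Psi_HS: "ell2 (entries (Psi a x))"
  unfolding Psi_eq_row_mult by (rule row_mult_HS[OF bdd S1 mult_right_HS hs_norm_mult_right])

lemma hs_norm_Psi_le: "hs_norm (Psi a x) \<le> hs_norm x"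
proof -
  have "(hs_norm (Psi a x))^2 \<le> (hs_norm x)^2"
    unfolding Psi_eq_row_mult by (rule hs_norm_row_mult_le[OF bdd S1 mult_right_HS hs_norm_mult_right])
  then show ?thesis by (rule power2_le_imp_le) simp
qed

lemma row_mult_mult_left_has_sum: "((\<lambda>j. mat_mult (adj (a j)) (mat_mult (a j) x) i k) has_sum x i k) UNIV"
  using sot_sum_id_l2inner_has_sum[OF bdd S1 ell2_basis_vec hs_norm_columns(1)[OF x], of i k]
  unfolding mat_mult_adj_entry l2inner_basis_vec mat_apply_basis_vec by (simp add: mat_mult_eq_columns)

text \<open>\<open>\<Sum>\<^sub>j \<langle>a\<^sub>j x, x a\<^sub>j\<rangle> = \<langle>x, \<Psi>(x)\<rangle>\<close>: expand both sides column by column and interchange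
  the sums, which is legitimate by Cauchy--Schwarz on \<open>\<nat> \<times> 'i\<close>.\<close>

lemma l2inner_mult_left_right_has_sum:
  "((\<lambda>j. l2inner (entries (mat_mult (a j) x)) (entries (mat_mult x (a j))))
     has_sum l2inner (entries x) (entries (Psi a x))) UNIV"
proof -
  define c where "c j k = l2inner (\<lambda>i. mat_mult (a j) x i k) (\<lambda>i. mat_mult x (a j) i k)" for j k
  define \<alpha> where "\<alpha> p = complex_of_real (l2norm (\<lambda>l. mat_mult (a (fst p)) x l (snd p)))" for p
  define \<beta> where "\<beta> p = complex_of_real (l2norm (\<lambda>l. mat_mult x (a (fst p)) l (snd p)))" for p
  have col_norms: "(\<lambda>p. (l2norm (\<lambda>l. Y (fst p) l (snd p)))^2) summable_on UNIV"
    if "\<And>j. ell2 (entries (Y j))" "((\<lambda>j. (hs_norm (Y j))^2) has_sum (hs_norm x)^2) UNIV" for Y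
    by (rule summable_on_pairs_from_rows[where h="\<lambda>j. (hs_norm (Y j))^2"])
      (use hs_norm_columns(2)[OF that(1)] that(2) in \<open>auto simp: has_sum_iff\<close>)
  have \<alpha>: "ell2 \<alpha>" unfolding ell2_def \<alpha>_def using col_norms[OF mult_left_HS hs_norm_mult_left] by simp
  have \<beta>: "ell2 \<beta>" unfolding ell2_def \<beta>_def using col_norms[OF mult_right_HS hs_norm_mult_right] by simp
  have cs: "(\<lambda>(j, k). c j k) summable_on UNIV \<times> UNIV"
  proof -
    have "cmod (c (fst p) (snd p)) \<le> cmod (\<alpha> p) * cmod (\<beta> p)" for p
      unfolding c_def \<alpha>_def \<beta>_def
      using l2inner_Cauchy_Schwarz[OF hs_norm_columns(1)[OF mult_left_HS] hs_norm_columns(1)[OF mult_right_HS]]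
      by simp
    then show ?thesis using summable_on_ell2_product[OF \<alpha> \<beta>] by (simp add: case_prod_unfold)
  qed
  have row: "l2inner (entries (mat_mult (a j) x)) (entries (mat_mult x (a j))) = (\<Sum>\<^sub>\<infinity>k. c j k)" for j
    unfolding c_def by (rule l2inner_entries_by_columns[OF mult_left_HS mult_right_HS])
  have "((\<lambda>j. c j k) has_sum l2inner (\<lambda>l. x l k) (\<lambda>i. Psi a x i k)) UNIV" for k
    unfolding c_def Psi_eq_row_mult mat_mult_eq_columns[of "a _" x]
    by (rule l2inner_row_mult_column_has_sum[OF bdd S1 mult_right_HS hs_norm_mult_right hs_norm_columns(1)[OF x]])
  then have "(\<Sum>\<^sub>\<infinity>k. \<Sum>\<^sub>\<infinity>j. c j k) = l2inner (entries x) (entries (Psi a x))"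
    unfolding l2inner_entries_by_columns[OF x Psi_HS] by (simp add: has_sum_iff)
  moreover have "(\<Sum>\<^sub>\<infinity>j. \<Sum>\<^sub>\<infinity>k. c j k) = (\<Sum>\<^sub>\<infinity>k. \<Sum>\<^sub>\<infinity>j. c j k)" by (rule infsum_swap_banach[OF cs])
  moreover have "(\<lambda>j. \<Sum>\<^sub>\<infinity>k. c j k) summable_on UNIV"
    using summable_on_Sigma_banach[of c UNIV "\<lambda>_. UNIV"] cs by simp
  ultimately show ?thesis unfolding row by (simp add: has_sum_iff)
qed

lemma commutator_HS: "ell2 (entries (\<lambda>i k. mat_mult x (a j) i k - mat_mult (a j) x i k))"
  unfolding entries_diff by (rule ell2_diff[OF mult_right_HS mult_left_HS])

lemma hs_norm_commutator_has_sum: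
  "((\<lambda>j. (hs_norm (\<lambda>i k. mat_mult x (a j) i k - mat_mult (a j) x i k))^2)
     has_sum 2 * (hs_norm x)^2 - 2 * Re (l2inner (entries x) (entries (Psi a x)))) UNIV"
proof -
  have expand: "(hs_norm (\<lambda>i k. mat_mult x (a j) i k - mat_mult (a j) x i k))^2
      = (hs_norm (mat_mult x (a j)))^2 + (hs_norm (mat_mult (a j) x))^2
        - 2 * Re (l2inner (entries (mat_mult (a j) x)) (entries (mat_mult x (a j))))" for j
    using l2norm_add_power2[OF mult_right_HS ell2_uminus[OF mult_left_HS]]
      l2inner_commute[of "entries (mat_mult x (a j))" "entries (mat_mult (a j) x)"]
    unfolding hs_norm_eq_l2norm entries_diff by (simp add: l2inner_uminus_right l2norm_uminus)
  show ?thesis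
    unfolding expand
    using has_sum_add[OF has_sum_add[OF hs_norm_mult_right hs_norm_mult_left]
        has_sum_cmult_right[OF has_sum_Re[OF l2inner_mult_left_right_has_sum], of "-2"]]
    by simp
qed

lemma Psi_minus_eq_row_mult:
  "(\<lambda>i k. Psi a x i k - x i k) = row_mult a (\<lambda>j i k. mat_mult x (a j) i k - mat_mult (a j) x i k)"
proof (intro ext)
  fix i k
  have "mat_mult (adj (a j)) (\<lambda>i k. mat_mult x (a j) i k - mat_mult (a j) x i k) i k
      = mat_mult (adj (a j)) (mat_mult x (a j)) i k - mat_mult (adj (a j)) (mat_mult (a j) x) i k" for j
    unfolding mat_mult_adj_entry
    by (rule l2inner_diff_right[OF bounded_mat_column_ell2[OF bdd]
          hs_norm_columns(1)[OF mult_right_HS] hs_norm_columns(1)[OF mult_left_HS]])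
  then show "Psi a x i k - x i k = row_mult a (\<lambda>j i k. mat_mult x (a j) i k - mat_mult (a j) x i k) i k"
    unfolding row_mult_def Psi_eq_row_mult
    using infsum_diff[OF row_mult_summable[OF bdd S1 mult_right_HS hs_norm_mult_right]
        has_sum_imp_summable[OF row_mult_mult_left_has_sum]]
      row_mult_mult_left_has_sum[of i k]
    by (simp add: has_sum_iff)
qed

lemma commut_HS: "ell2 (entries (commut a x))"
  and hs_norm_commut_power2:
    "(hs_norm (commut a x))^2 = 2 * (hs_norm x)^2 - 2 * Re (l2inner (entries x) (entries (Psi a x)))"
proof -
  define Yd where "Yd j = (\<lambda>i k. mat_mult x (a j) i k - mat_mult (a j) x i k)" for j
  define h where "h p = (cmod (entries (Yd (fst p)) (snd p)))^2" for p :: "nat \<times> 'i \<times> 'i"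
  have rows: "((\<lambda>q. h (j, q)) has_sum (hs_norm (Yd j))^2) UNIV" for j
    using commutator_HS[of j] unfolding h_def hs_norm_eq_l2norm l2norm_power2 ell2_def Yd_def
    by (simp add: has_sum_infsum)
  have tot: "((\<lambda>j. (hs_norm (Yd j))^2) has_sum 2 * (hs_norm x)^2 - 2 * Re (l2inner (entries x) (entries (Psi a x)))) UNIV"
    unfolding Yd_def by (rule hs_norm_commutator_has_sum)
  have hs: "h summable_on UNIV"
    by (rule summable_on_pairs_from_rows[OF _ rows]) (use tot in \<open>auto simp: h_def has_sum_iff\<close>)
  have htot: "infsum h UNIV = 2 * (hs_norm x)^2 - 2 * Re (l2inner (entries x) (entries (Psi a x)))"
    using summable_on_pairs_imp_rows(2)[OF hs] rows tot by (simp add: has_sum_iff)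
  define \<beta> where "\<beta> q = (fst (fst q), (snd (fst q), snd q))" for q :: "(nat \<times> 'i) \<times> 'i"
  have b: "bij_betw \<beta> UNIV UNIV"
    by (rule bij_betwI[of _ _ _ "\<lambda>p. ((fst p, fst (snd p)), snd (snd p))"]) (auto simp: \<beta>_def)
  have e: "(cmod (entries (commut a x) q))^2 = h (\<beta> q)" for q
    unfolding h_def \<beta>_def Yd_def entries_def commut_def by (simp add: norm_minus_commute)
  show "ell2 (entries (commut a x))"
    unfolding ell2_def e using summable_on_reindex_bij_betw[OF b, of h] hs by simp
  show "(hs_norm (commut a x))^2 = 2 * (hs_norm x)^2 - 2 * Re (l2inner (entries x) (entries (Psi a x)))"
    unfolding hs_norm_eq_l2norm l2norm_power2 e infsum_reindex_bij_betw[OF b, of h] htot ..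
qed

lemma hs_norm_commut_power2_le:
  "(hs_norm (commut a x))^2 \<le> 2 * hs_norm (\<lambda>i k. x i k - Psi a x i k) * hs_norm x"
proof -
  have d: "ell2 (entries (\<lambda>i k. x i k - Psi a x i k))" unfolding entries_diff by (rule ell2_diff[OF x Psi_HS])
  have "(hs_norm (commut a x))^2 = 2 * Re (l2inner (entries x) (entries (\<lambda>i k. x i k - Psi a x i k)))"
    unfolding hs_norm_commut_power2 entries_diff l2inner_diff_right[OF x x Psi_HS] l2inner_self[OF x]
    by (simp add: hs_norm_eq_l2norm)
  also have "\<dots> \<le> 2 * (hs_norm x * hs_norm (\<lambda>i k. x i k - Psi a x i k))"
    using l2inner_Cauchy_Schwarz[OF x d] complex_Re_le_cmod[of "l2inner (entries x) (entries (\<lambda>i k. x i k - Psi a x i k))"]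
    unfolding hs_norm_eq_l2norm by linarith
  finally show ?thesis by (simp add: mult_ac)
qed

lemma hs_norm_Psi_minus_le: "hs_norm (\<lambda>i k. Psi a x i k - x i k) \<le> hs_norm (commut a x)"
proof -
  have "(hs_norm (\<lambda>i k. Psi a x i k - x i k))^2 \<le> (hs_norm (commut a x))^2"
    unfolding Psi_minus_eq_row_mult hs_norm_commut_power2
    by (rule hs_norm_row_mult_le[OF bdd S1 commutator_HS hs_norm_commutator_has_sum])
  then show ?thesis by (rule power2_le_imp_le) simp
qed

end

lemma ell2_tensor: "ell2 p \<Longrightarrow> ell2 q \<Longrightarrow> ell2 (\<lambda>z. p (fst z) * q (snd z))"
proof -
  assume p: "ell2 p" and q: "ell2 q"
  have "((\<lambda>m. (cmod (p l * q m))^2) has_sum (cmod (p l))^2 * (l2norm q)^2) UNIV" for l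
    using has_sum_cmult_right[OF has_sum_infsum[of "\<lambda>m. (cmod (q m))^2" UNIV], of "(cmod (p l))^2"] q
    unfolding ell2_def l2norm_power2 by (simp add: norm_mult power_mult_distrib)
  then show ?thesis
    unfolding ell2_def
    by (intro summable_on_pairs_from_rows[where h="\<lambda>l. (cmod (p l))^2 * (l2norm q)^2"])
      (use p in \<open>auto simp: ell2_def intro: summable_on_cmult_left\<close>)
qed

lemma mat_mult_lincomb_left:
  assumes A: "bounded_mat A" and x: "ell2 (entries x)" and y: "ell2 (entries y)"
  shows "mat_mult (\<lambda>i k. p * x i k + q * y i k) A i k = p * mat_mult x A i k + q * mat_mult y A i k"
proof -
  have s: "(\<lambda>l. z i l * A l k) summable_on UNIV" if "ell2 (entries z)" for z
    by (rule summable_on_ell2_product[OF hs_norm_rows(1)[OF that, of i] bounded_mat_column_ell2[OF A, of k]])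
      (simp add: norm_mult)
  have "mat_mult (\<lambda>i k. p * x i k + q * y i k) A i k = (\<Sum>\<^sub>\<infinity>l. p * (x i l * A l k) + q * (y i l * A l k))"
    unfolding mat_mult_def by (simp add: algebra_simps)
  also have "\<dots> = p * mat_mult x A i k + q * mat_mult y A i k"
    unfolding mat_mult_def
    by (subst infsum_add) (auto intro!: summable_on_cmult_right s x y simp: infsum_cmult_right')
  finally show ?thesis .
qed

lemma sandwich_adj:
  assumes A: "bounded_mat A" and x: "ell2 (entries x)"
  shows "mat_mult (adj A) (mat_mult (adj x) A) i k = cnj (mat_mult (adj A) (mat_mult x A) k i)"
proof -
  define f where "f l m = cnj (A l i) * cnj (x m l) * A m k" for l m
  have u: "ell2 (\<lambda>z. cnj (A (fst z) i) * A (snd z) k)"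
    by (rule ell2_tensor[OF ell2_cnj[OF bounded_mat_column_ell2[OF A]] bounded_mat_column_ell2[OF A]])
  have v: "ell2 (entries (adj x))" using x by (simp add: ell2_entries_adj)
  have "(\<lambda>z. f (fst z) (snd z)) summable_on UNIV"
    by (rule summable_on_ell2_product[OF u v]) (simp add: f_def entries_def adj_def norm_mult)
  then have fs: "(\<lambda>(l, m). f l m) summable_on UNIV \<times> UNIV" by (simp add: case_prod_unfold)
  have L: "mat_mult (adj A) (mat_mult (adj x) A) i k = (\<Sum>\<^sub>\<infinity>l. \<Sum>\<^sub>\<infinity>m. f l m)"
    unfolding mat_mult_def adj_def f_def by (simp add: infsum_cmult_right'[symmetric] mult.assoc)
  have R: "cnj (mat_mult (adj A) (mat_mult x A) k i) = (\<Sum>\<^sub>\<infinity>m. \<Sum>\<^sub>\<infinity>l. f l m)"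
    unfolding mat_mult_def adj_def f_def
    by (simp add: infsum_cnj[symmetric] infsum_cmult_right'[symmetric] mult_ac)
  show ?thesis unfolding L R by (rule infsum_swap_banach[OF fs])
qed

context
  fixes a :: "nat \<Rightarrow> 'i \<Rightarrow> 'i \<Rightarrow> complex"
  assumes bdd: "\<And>j. bounded_mat (a j)" and S1: "sot_sum_id (\<lambda>j. mat_mult (adj (a j)) (a j))"
    and S2: "sot_sum_id (\<lambda>j. mat_mult (a j) (adj (a j)))"
begin

lemma Psi_summable: "ell2 (entries x) \<Longrightarrow> summable (\<lambda>j. mat_mult (adj (a j)) (mat_mult x (a j)) i k)"
  by (rule summable_on_imp_summable)
    (rule row_mult_summable[OF bdd S1 mult_right_HS[OF bdd S1 S2] hs_norm_mult_right[OF bdd S1 S2]])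

lemma Psi_lincomb:
  assumes x: "ell2 (entries x)" and y: "ell2 (entries y)"
  shows "Psi a (\<lambda>i k. p * x i k + q * y i k) = (\<lambda>i k. p * Psi a x i k + q * Psi a y i k)"
proof (intro ext)
  fix i k
  have "mat_mult (adj (a j)) (mat_mult (\<lambda>i k. p * x i k + q * y i k) (a j)) i k
     = p * mat_mult (adj (a j)) (mat_mult x (a j)) i k + q * mat_mult (adj (a j)) (mat_mult y (a j)) i k" for j
  proof -
    have cx: "ell2 (\<lambda>l. mat_mult x (a j) l k)"
      by (rule hs_norm_columns(1)[OF mult_right_HS[OF bdd S1 S2 x]])
    have cy: "ell2 (\<lambda>l. mat_mult y (a j) l k)"
      by (rule hs_norm_columns(1)[OF mult_right_HS[OF bdd S1 S2 y]])
    have ci: "ell2 (\<lambda>l. a j l i)" by (rule bounded_mat_column_ell2[OF bdd])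
    show ?thesis unfolding mat_mult_lincomb_left[OF bdd x y, abs_def] mat_mult_adj_entry
      using l2inner_add_right[OF ci ell2_cmult[OF cx, of p] ell2_cmult[OF cy, of q]]
        l2inner_cmult_right[OF ci cx, of p] l2inner_cmult_right[OF ci cy, of q] by simp
  qed
  then show "Psi a (\<lambda>i k. p * x i k + q * y i k) i k = p * Psi a x i k + q * Psi a y i k"
    unfolding Psi_def
    using suminf_add[OF summable_mult[OF Psi_summable[OF x], of p] summable_mult[OF Psi_summable[OF y], of q]]
      suminf_mult[OF Psi_summable[OF x], of p] suminf_mult[OF Psi_summable[OF y], of q]
    by simp
qed

lemma Psi_adj:
  assumes x: "ell2 (entries x)"
  shows "Psi a (adj x) = adj (Psi a x)"
proof (intro ext)
  fix i k
  have "Psi a (adj x) i k = (\<Sum>j. cnj (mat_mult (adj (a j)) (mat_mult x (a j)) k i))"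
    unfolding Psi_def sandwich_adj[OF bdd x] ..
  also have "\<dots> = adj (Psi a x) i k"
    unfolding adj_def[of "Psi a x"] Psi_def using sums_cnj[THEN iffD2, OF summable_sums[OF Psi_summable[OF x, of k i]]]
    by (rule sums_unique[symmetric])
  finally show "Psi a (adj x) i k = adj (Psi a x) i k" .
qed

end

section \<open>\<open>\<ell>\<^sup>2\<close> as a real Hilbert space\<close>

lemma l2norm_diff_pointwise_limit:
  assumes lim: "\<And>i. (\<lambda>m. X m i) \<longlonglongrightarrow> L i" and e: "0 \<le> e"
    and bound: "\<And>m. m \<ge> M \<Longrightarrow> ell2 (\<lambda>i. u i - X m i) \<and> l2norm (\<lambda>i. u i - X m i) \<le> e"
  shows "ell2 (\<lambda>i. u i - L i)" "l2norm (\<lambda>i. u i - L i) \<le> e"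
proof -
  have b: "(\<Sum>i\<in>F. (cmod (u i - L i))^2) \<le> e^2" if F: "finite F" for F
  proof (rule tendsto_le[OF _ tendsto_const])
    show "(\<lambda>m. \<Sum>i\<in>F. (cmod (u i - X m i))^2) \<longlonglongrightarrow> (\<Sum>i\<in>F. (cmod (u i - L i))^2)"
      by (intro tendsto_intros lim)
    show "\<forall>\<^sub>F m in sequentially. (\<Sum>i\<in>F. (cmod (u i - X m i))^2) \<le> e^2"
    proof (rule eventually_sequentiallyI[of M])
      fix m assume "M \<le> m"
      then show "(\<Sum>i\<in>F. (cmod (u i - X m i))^2) \<le> e^2"
        using sum_le_l2norm_power2[OF _ F, of "\<lambda>i. u i - X m i"] bound[of m]
        by (meson l2norm_nonneg order_trans power_mono)
    qed
  qed simp
  show "ell2 (\<lambda>i. u i - L i)" "l2norm (\<lambda>i. u i - L i) \<le> e"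
    using ell2_finite_sums_bounded[OF b e] by auto
qed

text \<open>The real inner product \<open>Re \<langle>u, v\<rangle>\<close> suffices for the surjectivity argument below.\<close>

typedef 'a ell2_vec = "{v :: 'a \<Rightarrow> complex. ell2 v}" morphisms ell2_rep ell2_abs
  by (rule exI[of _ "\<lambda>_. 0"]) simp

lemma ell2_rep: "ell2 (ell2_rep v)"
  using ell2_rep by auto

lemma ell2_rep_abs: "ell2 v \<Longrightarrow> ell2_rep (ell2_abs v) = v"
  by (simp add: ell2_abs_inverse)

instantiation ell2_vec :: (type) real_inner
begin

definition zero_ell2_vec :: "'a ell2_vec" where "zero_ell2_vec = ell2_abs (\<lambda>i. 0)"
definition plus_ell2_vec :: "'a ell2_vec \<Rightarrow> 'a ell2_vec \<Rightarrow> 'a ell2_vec" where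
  "plus_ell2_vec u v = ell2_abs (\<lambda>i. ell2_rep u i + ell2_rep v i)"
definition uminus_ell2_vec :: "'a ell2_vec \<Rightarrow> 'a ell2_vec" where
  "uminus_ell2_vec u = ell2_abs (\<lambda>i. - ell2_rep u i)"
definition minus_ell2_vec :: "'a ell2_vec \<Rightarrow> 'a ell2_vec \<Rightarrow> 'a ell2_vec" where
  "minus_ell2_vec u v = ell2_abs (\<lambda>i. ell2_rep u i - ell2_rep v i)"
definition scaleR_ell2_vec :: "real \<Rightarrow> 'a ell2_vec \<Rightarrow> 'a ell2_vec" where
  "scaleR_ell2_vec r u = ell2_abs (\<lambda>i. complex_of_real r * ell2_rep u i)"
definition norm_ell2_vec :: "'a ell2_vec \<Rightarrow> real" where "norm_ell2_vec u = l2norm (ell2_rep u)"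
definition inner_ell2_vec :: "'a ell2_vec \<Rightarrow> 'a ell2_vec \<Rightarrow> real" where
  "inner_ell2_vec u v = Re (l2inner (ell2_rep u) (ell2_rep v))"
definition dist_ell2_vec :: "'a ell2_vec \<Rightarrow> 'a ell2_vec \<Rightarrow> real" where "dist_ell2_vec u v = norm (u - v)"
definition sgn_ell2_vec :: "'a ell2_vec \<Rightarrow> 'a ell2_vec" where "sgn_ell2_vec u = inverse (norm u) *\<^sub>R u"
definition uniformity_ell2_vec :: "('a ell2_vec \<times> 'a ell2_vec) filter" where
  "uniformity_ell2_vec = (INF e\<in>{0 <..}. principal {(x, y). dist x y < e})"
definition open_ell2_vec :: "'a ell2_vec set \<Rightarrow> bool" where
  "open_ell2_vec U = (\<forall>x\<in>U. \<forall>\<^sub>F (x', y) in uniformity. x' = x \<longrightarrow> y \<in> U)"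

lemma ell2_rep_zero: "ell2_rep (0::'a ell2_vec) = (\<lambda>i. 0)"
  unfolding zero_ell2_vec_def by (simp add: ell2_rep_abs)

lemma ell2_rep_plus: "ell2_rep (u + v) = (\<lambda>i. ell2_rep u i + ell2_rep v i)"
  unfolding plus_ell2_vec_def by (simp add: ell2_rep_abs ell2_add ell2_rep)

lemma ell2_rep_uminus: "ell2_rep (- u) = (\<lambda>i. - ell2_rep u i)"
  unfolding uminus_ell2_vec_def by (simp add: ell2_rep_abs ell2_uminus ell2_rep)

lemma ell2_rep_minus: "ell2_rep (u - v) = (\<lambda>i. ell2_rep u i - ell2_rep v i)"
  unfolding minus_ell2_vec_def by (simp add: ell2_rep_abs ell2_diff ell2_rep)

lemma ell2_rep_scaleR: "ell2_rep (r *\<^sub>R u) = (\<lambda>i. complex_of_real r * ell2_rep u i)"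
  unfolding scaleR_ell2_vec_def by (simp add: ell2_rep_abs ell2_cmult ell2_rep)

instance
proof
  fix u v w :: "'a ell2_vec" and r s :: real
  show "u + v + w = u + (v + w)" by (rule ell2_rep_inject[THEN iffD1]) (simp add: ell2_rep_plus add.assoc)
  show "u + v = v + u" by (rule ell2_rep_inject[THEN iffD1]) (simp add: ell2_rep_plus add.commute)
  show "0 + u = u" by (rule ell2_rep_inject[THEN iffD1]) (simp add: ell2_rep_plus ell2_rep_zero)
  show "- u + u = 0" by (rule ell2_rep_inject[THEN iffD1]) (simp add: ell2_rep_plus ell2_rep_zero ell2_rep_uminus)
  show "u - v = u + - v" by (rule ell2_rep_inject[THEN iffD1]) (simp add: ell2_rep_plus ell2_rep_minus ell2_rep_uminus)
  show "r *\<^sub>R (u + v) = r *\<^sub>R u + r *\<^sub>R v"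
    by (rule ell2_rep_inject[THEN iffD1]) (simp add: ell2_rep_plus ell2_rep_scaleR distrib_left)
  show "(r + s) *\<^sub>R u = r *\<^sub>R u + s *\<^sub>R u"
    by (rule ell2_rep_inject[THEN iffD1]) (simp add: ell2_rep_plus ell2_rep_scaleR distrib_right)
  show "r *\<^sub>R s *\<^sub>R u = (r * s) *\<^sub>R u" by (rule ell2_rep_inject[THEN iffD1]) (simp add: ell2_rep_scaleR mult.assoc)
  show "1 *\<^sub>R u = u" by (rule ell2_rep_inject[THEN iffD1]) (simp add: ell2_rep_scaleR)
  show "dist u v = norm (u - v)" unfolding dist_ell2_vec_def ..
  show "sgn u = inverse (norm u) *\<^sub>R u" unfolding sgn_ell2_vec_def ..
  show "(uniformity :: ('a ell2_vec \<times> 'a ell2_vec) filter) = (INF e\<in>{0 <..}. principal {(x, y). dist x y < e})"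
    unfolding uniformity_ell2_vec_def ..
  show "open U = (\<forall>x\<in>U. \<forall>\<^sub>F (x', y) in uniformity. x' = x \<longrightarrow> y \<in> U)" for U :: "'a ell2_vec set"
    unfolding open_ell2_vec_def ..
  show "inner u v = inner v u" unfolding inner_ell2_vec_def by (subst l2inner_commute) simp
  show "inner (u + v) w = inner u w + inner v w"
    unfolding inner_ell2_vec_def ell2_rep_plus by (simp add: l2inner_add_left ell2_rep)
  show "inner (r *\<^sub>R u) v = r * inner u v"
    unfolding inner_ell2_vec_def ell2_rep_scaleR by (simp add: l2inner_cmult_left ell2_rep)
  show "0 \<le> inner u u" unfolding inner_ell2_vec_def by (simp add: l2inner_self ell2_rep)
  show "inner u u = 0 \<longleftrightarrow> u = 0"
  proof
    assume "inner u u = 0"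
    then have "l2norm (ell2_rep u) = 0" unfolding inner_ell2_vec_def by (simp add: l2inner_self ell2_rep)
    then have "ell2_rep u = (\<lambda>i. 0)" by (rule l2norm_eq_0[OF ell2_rep])
    then show "u = 0" using ell2_rep_zero ell2_rep_inject by metis
  qed (simp add: inner_ell2_vec_def ell2_rep_zero l2inner_def)
  show "norm u = sqrt (inner u u)"
    unfolding inner_ell2_vec_def norm_ell2_vec_def by (simp add: l2inner_self ell2_rep)
qed

end

lemma dist_ell2_vec_eq: "dist u v = l2norm (\<lambda>i. ell2_rep u i - ell2_rep v i)"
  unfolding dist_ell2_vec_def norm_ell2_vec_def ell2_rep_minus ..

instance ell2_vec :: (type) complete_space
proof
  fix X :: "nat \<Rightarrow> 'a ell2_vec" assume C: "Cauchy X"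
  have "Cauchy (\<lambda>n. ell2_rep (X n) i)" for i
  proof (rule metric_CauchyI)
    fix e :: real assume "0 < e"
    then obtain M where M: "\<forall>m\<ge>M. \<forall>n\<ge>M. dist (X m) (X n) < e" using C unfolding Cauchy_def by blast
    have "dist (ell2_rep (X m) i) (ell2_rep (X n) i) \<le> dist (X m) (X n)" for m n
      unfolding dist_ell2_vec_eq dist_norm
      using cmod_le_l2norm[OF ell2_diff[OF ell2_rep[of "X m"] ell2_rep[of "X n"]], of i] by simp
    then show "\<exists>M. \<forall>m\<ge>M. \<forall>n\<ge>M. dist (ell2_rep (X m) i) (ell2_rep (X n) i) < e"
      using M by (meson le_less_trans)
  qed
  then obtain L where L: "\<And>i. (\<lambda>n. ell2_rep (X n) i) \<longlonglongrightarrow> L i"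
    unfolding Cauchy_convergent_iff convergent_def by metis
  have near: "ell2 (\<lambda>i. ell2_rep (X n) i - L i) \<and> l2norm (\<lambda>i. ell2_rep (X n) i - L i) \<le> e"
    if "0 < e" "\<forall>m\<ge>M. \<forall>n\<ge>M. dist (X m) (X n) < e" "n \<ge> M" for e M n
    using l2norm_diff_pointwise_limit[OF L, of e M "ell2_rep (X n)"] that
    by (auto simp: dist_ell2_vec_eq ell2_diff ell2_rep less_imp_le)
  obtain M0 where "\<forall>m\<ge>M0. \<forall>n\<ge>M0. dist (X m) (X n) < 1" using C unfolding Cauchy_def
    by (meson zero_less_one)
  then have "ell2 (\<lambda>i. ell2_rep (X M0) i - L i)" using near[of 1 M0 M0] by simp
  then have "ell2 (\<lambda>i. ell2_rep (X M0) i - (ell2_rep (X M0) i - L i))" by (rule ell2_diff[OF ell2_rep])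
  then have L_ell2: "ell2 L" by simp
  have "X \<longlonglongrightarrow> ell2_abs L"
  proof (rule metric_LIMSEQ_I)
    fix r :: real assume r: "0 < r"
    then obtain M where M: "\<forall>m\<ge>M. \<forall>n\<ge>M. dist (X m) (X n) < r/2" using C unfolding Cauchy_def
      by (meson half_gt_zero)
    have "dist (X n) (ell2_abs L) < r" if "n \<ge> M" for n
      using near[of "r/2" M n] r M that unfolding dist_ell2_vec_eq ell2_rep_abs[OF L_ell2] by simp
    then show "\<exists>no. \<forall>n\<ge>no. dist (X n) (ell2_abs L) < r" by blast
  qed
  then show "convergent X" unfolding convergent_def by blast
qed

section \<open>Surjectivity of \<open>1 - T\<close> for a bounded-below contraction\<close>

lemma convex_square_lower_bound:
  fixes t c :: real assumes "0 \<le> t" "t \<le> 1" "0 < c"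
  shows "(min 1 c / 2)^2 \<le> (1 - t)^2 + t^2 * c^2"
proof (cases "t \<le> 1/2")
  case True
  have "(min 1 c / 2)^2 \<le> (1 - t)^2" by (rule power_mono) (use assms True in auto)
  then show ?thesis by (simp add: add_increasing2)
next
  case False
  have "c / 2 \<le> t * c" using mult_right_mono[of "1/2" t c] False assms by simp
  then have "min 1 c / 2 \<le> t * c" using min.cobounded2[of 1 c] by linarith
  then have "(min 1 c / 2)^2 \<le> (t * c)^2" by (rule power_mono) (use assms in simp)
  then show ?thesis by (simp add: power_mult_distrib add_increasing)
qed

text \<open>A continuity argument: \<open>1 - t T\<close> is invertible for \<open>t < 1\<close> by Banach's fixed point theorem,
  the lower bound \<open>\<delta> \<parallel>v\<parallel> \<le> \<parallel>v - t T v\<parallel>\<close> with \<open>\<delta> = min 1 c / 2\<close> is uniform in \<open>t \<in> [0, 1]\<close>,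
  and such a bound lets
  one pass from \<open>t\<close> to \<open>t + \<delta>/2\<close>.\<close>

context
  fixes T :: "'v::{real_inner,complete_space} \<Rightarrow> 'v" and c :: real
  assumes add: "\<And>u v. T (u + v) = T u + T v" and scale: "\<And>r v. T (r *\<^sub>R v) = r *\<^sub>R T v"
    and contr: "\<And>v. norm (T v) \<le> norm v"
    and c: "0 < c" and below: "\<And>v. c * norm v \<le> norm (v - T v)"
begin

lemma T_diff: "T (u - v) = T u - T v"
  using add[of u "(-1) *\<^sub>R v"] scale[of "-1" v] by simp

lemma norm_minus_scaled_lower_bound:
  assumes t: "0 \<le> t" "t \<le> 1"
  shows "min 1 c / 2 * norm v \<le> norm (v - t *\<^sub>R T v)"
proof -
  define u where "u = v - T v"
  have e: "v - t *\<^sub>R T v = (1 - t) *\<^sub>R v + t *\<^sub>R u" unfolding u_def by (simp add: algebra_simps)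
  have "inner v (T v) \<le> norm v * norm v"
    using norm_cauchy_schwarz[of v "T v"] mult_left_mono[OF contr[of v], of "norm v"] by simp
  then have iv: "0 \<le> inner v u"
    unfolding u_def by (simp add: inner_diff_right power2_norm_eq_inner[symmetric] power2_eq_square)
  have "(norm (v - t *\<^sub>R T v))^2
      = (1 - t)^2 * (norm v)^2 + 2 * ((1 - t) * t) * inner v u + t^2 * (norm u)^2"
    unfolding e power2_norm_eq_inner
    by (simp add: inner_add_left inner_add_right inner_commute power2_eq_square algebra_simps)
  also have "\<dots> \<ge> (1 - t)^2 * (norm v)^2 + t^2 * (norm u)^2"
    using iv t by simp
  finally have A: "(1 - t)^2 * (norm v)^2 + t^2 * (norm u)^2 \<le> (norm (v - t *\<^sub>R T v))^2" .
  have "t^2 * (c * norm v)^2 \<le> t^2 * (norm u)^2"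
    by (rule mult_left_mono) (use below[of v] c in \<open>auto simp: u_def intro!: power_mono\<close>)
  then have B: "((1 - t)^2 + t^2 * c^2) * (norm v)^2 \<le> (norm (v - t *\<^sub>R T v))^2"
    using A by (simp add: algebra_simps power_mult_distrib)
  have "(min 1 c / 2 * norm v)^2 \<le> ((1 - t)^2 + t^2 * c^2) * (norm v)^2"
    unfolding power_mult_distrib by (rule mult_right_mono[OF convex_square_lower_bound[OF t c]]) simp
  then have "(min 1 c / 2 * norm v)^2 \<le> (norm (v - t *\<^sub>R T v))^2" using B by linarith
  then show ?thesis by (rule power2_le_imp_le) simp
qed

lemma surj_id_minus_scaled_below_one:
  assumes "0 \<le> t" "t < 1" shows "\<exists>x. x - t *\<^sub>R T x = y"
proof -
  have "\<exists>!x. y + t *\<^sub>R T x = x"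
  proof (rule banach_fix_type[of t])
    show "\<forall>x x'. dist (y + t *\<^sub>R T x) (y + t *\<^sub>R T x') \<le> t * dist x x'"
    proof (intro allI)
      fix x x'
      show "dist (y + t *\<^sub>R T x) (y + t *\<^sub>R T x') \<le> t * dist x x'"
        using mult_left_mono[OF contr[of "x - x'"] assms(1)]
        by (simp add: dist_norm T_diff scaleR_diff_right[symmetric] assms(1))
    qed
  qed (use assms in auto)
  then show ?thesis by (metis add_diff_cancel)
qed

lemma surj_id_minus_scaled_step:
  assumes t: "0 \<le> t" and s: "0 \<le> s" "s \<le> min 1 c / 4" and ts: "t + s \<le> 1"
    and surj: "\<And>y. \<exists>x. x - t *\<^sub>R T x = y"
  shows "\<exists>x. x - (t + s) *\<^sub>R T x = y"
proof -
  define \<delta> where "\<delta> = min 1 c / 2"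
  have \<delta>: "0 < \<delta>" unfolding \<delta>_def using c by simp
  define S where "S z = (SOME x. x - t *\<^sub>R T x = z)" for z
  have S: "S z - t *\<^sub>R T (S z) = z" for z
    unfolding S_def using surj by (meson someI_ex)
  have S_lipschitz: "\<delta> * norm (S z - S z') \<le> norm (z - z')" for z z'
  proof -
    have "S z - S z' - t *\<^sub>R T (S z - S z') = (S z - t *\<^sub>R T (S z)) - (S z' - t *\<^sub>R T (S z'))"
      by (simp add: T_diff scaleR_diff_right)
    then have "S z - S z' - t *\<^sub>R T (S z - S z') = z - z'" unfolding S .
    then show ?thesis using norm_minus_scaled_lower_bound[OF t, of "S z - S z'"] ts s
      unfolding \<delta>_def by simp
  qed
  have "\<exists>!x. S (y + s *\<^sub>R T x) = x"
  proof (rule banach_fix_type[of "1/2"])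
    show "\<forall>x x'. dist (S (y + s *\<^sub>R T x)) (S (y + s *\<^sub>R T x')) \<le> 1/2 * dist x x'"
    proof (intro allI)
      fix x x'
      have "\<delta> * dist (S (y + s *\<^sub>R T x)) (S (y + s *\<^sub>R T x')) \<le> s * norm (T (x - x'))"
        using S_lipschitz[of "y + s *\<^sub>R T x" "y + s *\<^sub>R T x'"]
        by (simp add: dist_norm T_diff scaleR_diff_right[symmetric] s)
      also have "\<dots> \<le> \<delta> * (1/2 * dist x x')"
        using mult_mono[OF s(2) contr[of "x - x'"]] s unfolding \<delta>_def dist_norm by simp
      finally show "dist (S (y + s *\<^sub>R T x)) (S (y + s *\<^sub>R T x')) \<le> 1/2 * dist x x'"
        using \<delta> by simp
    qed
  qed auto
  then obtain x where "S (y + s *\<^sub>R T x) = x" by blast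
  then have "x - t *\<^sub>R T x = y + s *\<^sub>R T x" using S[of "y + s *\<^sub>R T x"] by simp
  then show ?thesis by (intro exI[of _ x]) (simp add: algebra_simps)
qed

lemma surj_id_minus: "\<exists>x. x - T x = y"
proof -
  define s where "s = min 1 c / 4"
  have s: "0 < s" "s \<le> 1/4" unfolding s_def using c by auto
  have "\<exists>x. x - ((1 - s) + s) *\<^sub>R T x = y"
    by (rule surj_id_minus_scaled_step) (use s surj_id_minus_scaled_below_one in \<open>auto simp: s_def\<close>)
  then show ?thesis by simp
qed

end

section \<open>Invertibility of \<open>\<Phi> - 1\<close>\<close>

definition Psi_minus_id :: "(nat \<Rightarrow> 'i \<Rightarrow> 'i \<Rightarrow> complex) \<Rightarrow> ('i \<Rightarrow> 'i \<Rightarrow> complex) \<Rightarrow> 'i \<Rightarrow> 'i \<Rightarrow> complex" where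
  "Psi_minus_id a x = (\<lambda>i k. Psi a x i k - x i k)"

definition bounded_below_HS :: "(('i \<Rightarrow> 'i \<Rightarrow> complex) \<Rightarrow> ('i \<Rightarrow> 'i \<Rightarrow> complex)) \<Rightarrow> bool" where
  "bounded_below_HS F \<longleftrightarrow> (\<exists>c>0. \<forall>x. is_HS x \<longrightarrow> c * hs_norm x \<le> hs_norm (F x))"

lemma HS_invertible_imp_bounded_below:
  assumes "HS_invertible F" and F: "\<And>x. is_HS x \<Longrightarrow> is_HS (F x)"
  shows "bounded_below_HS F"
proof -
  obtain G C where G: "\<And>x. is_HS x \<Longrightarrow> G (F x) = x"
    and GC: "\<And>y. is_HS y \<Longrightarrow> hs_norm (G y) \<le> C * hs_norm y"
    using assms(1) unfolding HS_invertible_def by blast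
  have "hs_norm x / max C 1 \<le> hs_norm (F x)" if x: "is_HS x" for x
  proof -
    have "hs_norm x \<le> C * hs_norm (F x)" using GC[OF F[OF x]] G[OF x] by simp
    also have "\<dots> \<le> max C 1 * hs_norm (F x)" by (rule mult_right_mono) simp_all
    finally show ?thesis by (simp add: pos_divide_le_eq mult.commute)
  qed
  then show ?thesis unfolding bounded_below_HS_def by (intro exI[of _ "1 / max C 1"]) auto
qed

lemma bounded_below_HS_no_approx_kernel:
  assumes "bounded_below_HS F" and xs: "\<And>n. is_HS (xs n) \<and> hs_norm (xs n) = 1"
  shows "\<not> (\<lambda>n. hs_norm (F (xs n))) \<longlonglongrightarrow> 0"
proof
  assume lim: "(\<lambda>n. hs_norm (F (xs n))) \<longlonglongrightarrow> 0"
  obtain c where c: "0 < c" and b: "\<And>x. is_HS x \<Longrightarrow> c * hs_norm x \<le> hs_norm (F x)"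
    using assms(1) unfolding bounded_below_HS_def by blast
  have "c \<le> hs_norm (F (xs n))" for n using b[of "xs n"] xs[of n] by simp
  then have "c \<le> 0" by (intro tendsto_le[OF _ lim tendsto_const] always_eventually) auto
  with c show False by simp
qed

context
  fixes a :: "nat \<Rightarrow> 'i \<Rightarrow> 'i \<Rightarrow> complex"
  assumes bdd: "\<And>j. bounded_mat (a j)" and S1: "sot_sum_id (\<lambda>j. mat_mult (adj (a j)) (a j))"
    and S2: "sot_sum_id (\<lambda>j. mat_mult (a j) (adj (a j)))"
begin

lemma Psi_minus_id_HS: "ell2 (entries x) \<Longrightarrow> ell2 (entries (Psi_minus_id a x))"
  unfolding Psi_minus_id_def entries_diff by (rule ell2_diff[OF Psi_HS[OF bdd S1 S2]])

lemma Psi_minus_id_lincomb: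
  assumes "ell2 (entries x)" "ell2 (entries y)"
  shows "Psi_minus_id a (\<lambda>i k. p * x i k + q * y i k) = (\<lambda>i k. p * Psi_minus_id a x i k + q * Psi_minus_id a y i k)"
  unfolding Psi_minus_id_def Psi_lincomb[OF bdd S1 S2 assms] by (auto intro!: ext simp: algebra_simps)

lemma Psi_minus_id_cmult:
  "ell2 (entries x) \<Longrightarrow> Psi_minus_id a (\<lambda>i k. p * x i k) = (\<lambda>i k. p * Psi_minus_id a x i k)"
  using Psi_minus_id_lincomb[of x x p 0] by simp

lemma Psi_minus_id_adj: "ell2 (entries x) \<Longrightarrow> Psi_minus_id a (adj x) = adj (Psi_minus_id a x)"
  unfolding Psi_minus_id_def Psi_adj[OF bdd S1 S2] by (auto intro!: ext simp: adj_def)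

lemma selfadjoint_combination:
  fixes p :: complex
  assumes z: "ell2 (entries z)"
  defines "y \<equiv> (\<lambda>i k. p * z i k + cnj p * adj z i k)"
  shows "ell2 (entries y)" "adj y = y" "hs_norm (Psi_minus_id a y) \<le> 2 * cmod p * hs_norm (Psi_minus_id a z)"
proof -
  have az: "ell2 (entries (adj z))" using z by (simp add: ell2_entries_adj)
  show "ell2 (entries y)" unfolding y_def by (rule ell2_entries_lincomb[OF z az])
  show "adj y = y" unfolding y_def adj_def by (auto intro!: ext simp: add.commute)
  have F: "ell2 (entries (Psi_minus_id a z))" by (rule Psi_minus_id_HS[OF z])
  have "Psi_minus_id a y = (\<lambda>i k. p * Psi_minus_id a z i k + cnj p * adj (Psi_minus_id a z) i k)"
    unfolding y_def Psi_minus_id_lincomb[OF z az] Psi_minus_id_adj[OF z] ..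
  then show "hs_norm (Psi_minus_id a y) \<le> 2 * cmod p * hs_norm (Psi_minus_id a z)"
    using hs_norm_lincomb_le[OF F ell2_entries_adj[THEN iffD2, OF F], of p "cnj p"]
    by (simp add: hs_norm_adj)
qed

lemma normalize_HS:
  assumes s: "ell2 (entries s)" and r: "0 < hs_norm s"
  defines "y \<equiv> (\<lambda>i k. complex_of_real (1 / hs_norm s) * s i k)"
  shows "ell2 (entries y)" "hs_norm y = 1" "adj s = s \<Longrightarrow> adj y = y"
    "hs_norm (Psi_minus_id a y) = hs_norm (Psi_minus_id a s) / hs_norm s"
proof -
  show "ell2 (entries y)" using ell2_entries_lincomb[OF s s, of "complex_of_real (1 / hs_norm s)" 0]
    unfolding y_def by simp
  show "hs_norm y = 1" unfolding y_def hs_norm_cmult[OF s] using r by (simp add: norm_divide)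
  show "adj y = y" if "adj s = s"
    using fun_cong[OF fun_cong[OF that]] unfolding y_def adj_def by (auto intro!: ext)
  show "hs_norm (Psi_minus_id a y) = hs_norm (Psi_minus_id a s) / hs_norm s"
    unfolding y_def Psi_minus_id_cmult[OF s] hs_norm_cmult[OF Psi_minus_id_HS[OF s]]
    using r by (simp add: norm_divide)
qed

text \<open>An approximate fixed point \<open>x\<close> splits as \<open>h + i g\<close> with \<open>h, g\<close> selfadjoint approximate fixed
  points, and one of \<open>h, g\<close> carries at least half the norm of \<open>x\<close>.\<close>

lemma selfadjoint_approx_fixed_point:
  assumes x: "ell2 (entries x)" and e: "0 < e" and lt: "hs_norm (Psi_minus_id a x) < e * hs_norm x"
  shows "\<exists>y. ell2 (entries y) \<and> adj y = y \<and> hs_norm y = 1 \<and> hs_norm (Psi_minus_id a y) \<le> 2 * e"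
proof -
  have "0 < e * hs_norm x" using lt hs_norm_nonneg[of "Psi_minus_id a x"] by linarith
  then have N: "0 < hs_norm x" using e by (simp add: zero_less_mult_iff)
  define x' where "x' = (\<lambda>i k. complex_of_real (1 / hs_norm x) * x i k)"
  note X = normalize_HS[OF x N, folded x'_def]
  have Fx': "hs_norm (Psi_minus_id a x') < e" using X(4) lt N by (simp add: divide_less_eq)
  define h where "h = (\<lambda>i k. (1/2::complex) * x' i k + cnj (1/2) * adj x' i k)"
  define g where "g = (\<lambda>i k. (-\<i>/2) * x' i k + cnj (-\<i>/2) * adj x' i k)"
  note H = selfadjoint_combination[OF X(1), of "1/2", folded h_def]
  note G = selfadjoint_combination[OF X(1), of "-\<i>/2", folded g_def]
  have "x' = (\<lambda>i k. 1 * h i k + \<i> * g i k)" unfolding h_def g_def by (auto intro!: ext simp: algebra_simps)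
  then have "1 \<le> hs_norm h + hs_norm g" using hs_norm_lincomb_le[OF H(1) G(1), of 1 \<i>] X(2) by simp
  then have "1/2 \<le> hs_norm h \<or> 1/2 \<le> hs_norm g" by linarith
  moreover have "hs_norm (Psi_minus_id a h) < e" using H(3) Fx' by simp
  moreover have "hs_norm (Psi_minus_id a g) < e" using G(3) Fx' by (simp add: norm_divide)
  ultimately obtain s where s: "ell2 (entries s)" "adj s = s" "1/2 \<le> hs_norm s" "hs_norm (Psi_minus_id a s) < e"
    using H G by blast
  have r: "0 < hs_norm s" using s(3) by simp
  have "hs_norm (Psi_minus_id a s) / hs_norm s \<le> e / (1/2)"
    by (rule frac_le) (use s e in auto)
  then show ?thesis
    using normalize_HS[OF s(1) r] s(2)
    by (intro exI[of _ "\<lambda>i k. complex_of_real (1 / hs_norm s) * s i k"]) simp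
qed

lemma not_bounded_below_imp_approx_fixed_points:
  assumes "\<not> bounded_below_HS (Psi_minus_id a)"
  shows "\<exists>xs. (\<forall>n. is_HS (xs n) \<and> adj (xs n) = xs n \<and> hs_norm (xs n) = 1) \<and>
           (\<lambda>n. hs_norm (Psi_minus_id a (xs n))) \<longlonglongrightarrow> 0"
proof -
  have "\<exists>y. ell2 (entries y) \<and> adj y = y \<and> hs_norm y = 1 \<and> hs_norm (Psi_minus_id a y) \<le> 2 * (1 / real (Suc n))" for n
  proof -
    obtain x where x: "is_HS x" "\<not> (1 / real (Suc n)) * hs_norm x \<le> hs_norm (Psi_minus_id a x)"
      using assms unfolding bounded_below_HS_def by (meson of_nat_0_less_iff zero_less_Suc zero_less_divide_1_iff)
    then show ?thesis
      by (intro selfadjoint_approx_fixed_point) (auto simp: is_HS_iff_ell2)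
  qed
  then obtain xs where xs: "\<And>n. ell2 (entries (xs n)) \<and> adj (xs n) = xs n \<and> hs_norm (xs n) = 1
      \<and> hs_norm (Psi_minus_id a (xs n)) \<le> 2 * (1 / real (Suc n))"
    by metis
  have "(\<lambda>n. hs_norm (Psi_minus_id a (xs n))) \<longlonglongrightarrow> 0"
  proof (rule tendsto_sandwich[of "\<lambda>n. 0" _ _ "\<lambda>n. 2 * (1 / real (Suc n))"])
    show "(\<lambda>n. 2 * (1 / real (Suc n))) \<longlonglongrightarrow> 0"
      using tendsto_mult_right_zero[OF LIMSEQ_inverse_real_of_nat, of 2] by (simp add: inverse_eq_divide)
  qed (use xs in auto)
  then show ?thesis using xs is_HS_iff_ell2 by blast
qed

definition mat_of_ell2_vec :: "('i \<times> 'i) ell2_vec \<Rightarrow> 'i \<Rightarrow> 'i \<Rightarrow> complex" where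
  "mat_of_ell2_vec v = (\<lambda>i k. ell2_rep v (i, k))"

lemma entries_mat_of_ell2_vec: "entries (mat_of_ell2_vec v) = ell2_rep v"
  unfolding entries_def mat_of_ell2_vec_def by simp

lemma mat_of_ell2_vec_HS: "ell2 (entries (mat_of_ell2_vec v))"
  unfolding entries_mat_of_ell2_vec by (rule ell2_rep)

lemma mat_of_ell2_vec_lincomb:
  "mat_of_ell2_vec (u + v) = (\<lambda>i k. 1 * mat_of_ell2_vec u i k + 1 * mat_of_ell2_vec v i k)"
  "mat_of_ell2_vec (r *\<^sub>R v) = (\<lambda>i k. complex_of_real r * mat_of_ell2_vec v i k + 0 * mat_of_ell2_vec v i k)"
  unfolding mat_of_ell2_vec_def by (simp_all add: ell2_rep_plus ell2_rep_scaleR)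

definition Psi_vec :: "('i \<times> 'i) ell2_vec \<Rightarrow> ('i \<times> 'i) ell2_vec" where
  "Psi_vec v = ell2_abs (entries (Psi a (mat_of_ell2_vec v)))"

lemma ell2_rep_Psi_vec: "ell2_rep (Psi_vec v) = entries (Psi a (mat_of_ell2_vec v))"
  unfolding Psi_vec_def by (rule ell2_rep_abs[OF Psi_HS[OF bdd S1 S2 mat_of_ell2_vec_HS]])

lemma Psi_vec_add: "Psi_vec (u + v) = Psi_vec u + Psi_vec v"
  by (rule ell2_rep_inject[THEN iffD1])
    (unfold ell2_rep_Psi_vec ell2_rep_plus mat_of_ell2_vec_lincomb
       Psi_lincomb[OF bdd S1 S2 mat_of_ell2_vec_HS mat_of_ell2_vec_HS], simp add: entries_def)

lemma Psi_vec_scaleR: "Psi_vec (r *\<^sub>R v) = r *\<^sub>R Psi_vec v"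
  by (rule ell2_rep_inject[THEN iffD1])
    (unfold ell2_rep_Psi_vec ell2_rep_scaleR mat_of_ell2_vec_lincomb
       Psi_lincomb[OF bdd S1 S2 mat_of_ell2_vec_HS mat_of_ell2_vec_HS], simp add: entries_def)

lemma norm_Psi_vec_le: "norm (Psi_vec v) \<le> norm v"
  using hs_norm_Psi_le[OF bdd S1 S2 mat_of_ell2_vec_HS, of v]
  unfolding norm_ell2_vec_def ell2_rep_Psi_vec hs_norm_eq_l2norm entries_mat_of_ell2_vec .

lemma norm_minus_Psi_vec: "norm (v - Psi_vec v) = hs_norm (Psi_minus_id a (mat_of_ell2_vec v))"
proof -
  have "ell2_rep (v - Psi_vec v) = (\<lambda>p. - entries (Psi_minus_id a (mat_of_ell2_vec v)) p)"
    unfolding ell2_rep_minus ell2_rep_Psi_vec Psi_minus_id_def entries_diff entries_mat_of_ell2_vec by simp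
  then show ?thesis unfolding norm_ell2_vec_def hs_norm_eq_l2norm by (simp add: l2norm_uminus)
qed

lemma Psi_minus_id_surj:
  assumes below: "bounded_below_HS (Psi_minus_id a)" and y: "ell2 (entries y)"
  shows "\<exists>x. ell2 (entries x) \<and> Psi_minus_id a x = y"
proof -
  obtain c where c: "0 < c" and b: "\<And>x. is_HS x \<Longrightarrow> c * hs_norm x \<le> hs_norm (Psi_minus_id a x)"
    using below unfolding bounded_below_HS_def by blast
  have "c * norm v \<le> norm (v - Psi_vec v)" for v
  proof -
    have "hs_norm (mat_of_ell2_vec v) = norm v"
      unfolding hs_norm_eq_l2norm entries_mat_of_ell2_vec norm_ell2_vec_def ..
    then show ?thesis
      using b[of "mat_of_ell2_vec v"] mat_of_ell2_vec_HS[of v]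
      unfolding norm_minus_Psi_vec is_HS_iff_ell2 by simp
  qed
  then obtain v where v: "v - Psi_vec v = ell2_abs (\<lambda>p. - entries y p)"
    using surj_id_minus[OF Psi_vec_add Psi_vec_scaleR norm_Psi_vec_le c] by blast
  have "ell2_rep (v - Psi_vec v) = (\<lambda>p. - entries y p)"
    unfolding v by (rule ell2_rep_abs[OF ell2_uminus[OF y]])
  then have "ell2_rep v (i, k) - entries (Psi a (mat_of_ell2_vec v)) (i, k) = - y i k" for i k
    unfolding ell2_rep_minus ell2_rep_Psi_vec by (drule_tac fun_cong[of _ _ "(i, k)"]) (simp add: entries_def)
  then have "Psi_minus_id a (mat_of_ell2_vec v) = y"
    by (auto intro!: ext simp: Psi_minus_id_def entries_def mat_of_ell2_vec_def algebra_simps)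
  then show ?thesis using mat_of_ell2_vec_HS by blast
qed

lemma Psi_minus_id_inj:
  assumes below: "bounded_below_HS (Psi_minus_id a)"
    and "is_HS x" "is_HS x'" "Psi_minus_id a x = Psi_minus_id a x'"
  shows "x = x'"
proof -
  obtain c where c: "0 < c" and b: "\<And>x. is_HS x \<Longrightarrow> c * hs_norm x \<le> hs_norm (Psi_minus_id a x)"
    using below unfolding bounded_below_HS_def by blast
  define d where "d = (\<lambda>i k. 1 * x i k + (-1) * x' i k)"
  have d: "is_HS d" using assms(2,3) unfolding d_def is_HS_iff_ell2 by (intro ell2_entries_lincomb)
  have "Psi_minus_id a d = (\<lambda>i k. 0)"
    using assms(2-4) unfolding d_def is_HS_iff_ell2 by (subst Psi_minus_id_lincomb) auto
  then have "c * hs_norm d \<le> 0" using b[OF d] by (simp add: hs_norm_eq_l2norm entries_def l2norm_def)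
  then have "hs_norm d \<le> 0" using c by (simp add: mult_le_0_iff)
  then have "l2norm (entries d) = 0" using hs_norm_nonneg[of d] unfolding hs_norm_eq_l2norm by linarith
  then have "entries d = (\<lambda>p. 0)" using d unfolding is_HS_iff_ell2 by (intro l2norm_eq_0)
  then have "x i k - x' i k = 0" for i k
    using fun_cong[of "entries d" _ "(i, k)"] unfolding d_def entries_def by simp
  then show "x = x'" by (auto intro!: ext)
qed

lemma bounded_below_imp_HS_invertible:
  assumes below: "bounded_below_HS (Psi_minus_id a)"
  shows "HS_invertible (Psi_minus_id a)"
proof -
  obtain c where c: "0 < c" and b: "\<And>x. is_HS x \<Longrightarrow> c * hs_norm x \<le> hs_norm (Psi_minus_id a x)"
    using below unfolding bounded_below_HS_def by blast
  define G where "G y = (SOME x. ell2 (entries x) \<and> Psi_minus_id a x = y)" for y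
  have G: "ell2 (entries (G y)) \<and> Psi_minus_id a (G y) = y" if "is_HS y" for y
    unfolding G_def using Psi_minus_id_surj[OF below that[unfolded is_HS_iff_ell2]] by (rule someI_ex)
  have "\<forall>y. is_HS y \<longrightarrow> is_HS (G y)" using G by (simp add: is_HS_iff_ell2)
  moreover have "\<forall>x. is_HS x \<longrightarrow> G (Psi_minus_id a x) = x"
  proof (intro allI impI)
    fix x :: "'i \<Rightarrow> 'i \<Rightarrow> complex" assume x: "is_HS x"
    then have "is_HS (Psi_minus_id a x)" using Psi_minus_id_HS by (simp add: is_HS_iff_ell2)
    then show "G (Psi_minus_id a x) = x"
      using G Psi_minus_id_inj[OF below _ x, of "G (Psi_minus_id a x)"] by (simp add: is_HS_iff_ell2)
  qed
  moreover have "\<forall>y. is_HS y \<longrightarrow> Psi_minus_id a (G y) = y" using G by blast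
  moreover have "\<forall>y. is_HS y \<longrightarrow> hs_norm (G y) \<le> (1/c) * hs_norm y"
  proof (intro allI impI)
    fix y :: "'i \<Rightarrow> 'i \<Rightarrow> complex" assume "is_HS y"
    then have "c * hs_norm (G y) \<le> hs_norm y" using b[of "G y"] G by (simp add: is_HS_iff_ell2)
    then show "hs_norm (G y) \<le> (1/c) * hs_norm y" using c by (simp add: field_simps)
  qed
  ultimately show ?thesis unfolding HS_invertible_def by blast
qed

end

theorem proposition2p1:
  fixes a :: "nat \<Rightarrow> 'i::countable \<Rightarrow> 'i \<Rightarrow> complex"
  assumes bdd: "\<And>j. bounded_mat (a j)"
    and sum1: "sot_sum_id (\<lambda>j. mat_mult (adj (a j)) (a j))"
    and sum2: "sot_sum_id (\<lambda>j. mat_mult (a j) (adj (a j)))"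
  shows
    "(\<forall>x. is_HS x \<longrightarrow> is_HS (Psi a x) \<and> hs_norm (Psi a x) \<le> hs_norm x)
     \<and> (\<forall>x. is_HS x \<longrightarrow>
          hs2 (commut a x) < \<infinity>
        \<and> hs_norm (commut a x) ^ 2 \<le> 2 * hs_norm (\<lambda>i k. x i k - Psi a x i k) * hs_norm x
        \<and> hs_norm (\<lambda>i k. Psi a x i k - x i k) \<le> hs_norm (commut a x))
     \<and> ((\<not> HS_invertible (\<lambda>x i k. Psi a x i k - x i k)) \<longleftrightarrow>
        (\<exists>xs :: nat \<Rightarrow> 'i \<Rightarrow> 'i \<Rightarrow> complex.
           (\<forall>n. is_HS (xs n) \<and> adj (xs n) = xs n \<and> hs_norm (xs n) = 1) \<and>
           (\<lambda>n. hs_norm (\<lambda>i k. Psi a (xs n) i k - xs n i k)) \<longlonglongrightarrow> 0))"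
proof -
  note facts = Psi_HS hs_norm_Psi_le hs_norm_commut_power2_le hs_norm_Psi_minus_le
  have F: "(\<lambda>x i k. Psi a x i k - x i k) = Psi_minus_id a"
    unfolding Psi_minus_id_def ..
  have "HS_invertible (Psi_minus_id a) \<longleftrightarrow> bounded_below_HS (Psi_minus_id a)"
    using HS_invertible_imp_bounded_below bounded_below_imp_HS_invertible[OF bdd sum1 sum2]
      Psi_minus_id_HS[OF bdd sum1 sum2] by (auto simp: is_HS_iff_ell2)
  then have "\<not> HS_invertible (Psi_minus_id a) \<longleftrightarrow>
      (\<exists>xs. (\<forall>n. is_HS (xs n) \<and> adj (xs n) = xs n \<and> hs_norm (xs n) = 1) \<and>
        (\<lambda>n. hs_norm (Psi_minus_id a (xs n))) \<longlonglongrightarrow> 0)"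
    using not_bounded_below_imp_approx_fixed_points[OF bdd sum1 sum2] bounded_below_HS_no_approx_kernel
    by blast
  moreover have "hs2 (commut a x) < \<infinity>" if "is_HS x" for x
    using commut_HS[OF bdd sum1 sum2, of x] that by (simp only: is_HS_iff_ell2 hs2_finite_iff_ell2)
  ultimately show ?thesis
    unfolding F using facts[OF bdd sum1 sum2] by (simp add: Psi_minus_id_def is_HS_iff_ell2)
qed

end
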